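(* Let $G$ be a Berge graph, let $X\subseteq V(G)$ be anticonnected, let $C$ be a hole in $G\setminus X$ of length $>4$, and let $uv$ be an edge of $C$ such that $u,v$ are $X$-complete and no other vertex of $C$ is $X$-complete. Number the vertices of $C$ as $p_1,\dots,p_n$ in order with $p_1=u$, $p_n=v$. Then either $X$ contains a vertex adjacent to $u$ and $v$ and to no other vertex of $C$, or $X$ contains two nonadjacent vertices $a,b$ such that the neighbours of $a$ in $V(C)$ are exactly $p_1,p_2,p_n$ and the neighbours of $b$ in $V(C)$ are exactly $p_1,p_{n-1},p_n$.
   Context: Graphs are finite and simple. Hole: induced cycle of length $\ge4$; antihole: induced subgraph whose complement is a hole; Berge: all holes and antiholes have even length. $X$ is anticonnected if the complement of $G|X$ is connected; a vertex is $X$-complete if it is adjacent to every vertex of $X$. *)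

theory Defs
  imports Main
begin

definition simple_graph :: "'a set \<Rightarrow> ('a \<Rightarrow> 'a \<Rightarrow> bool) \<Rightarrow> bool" where
  "simple_graph V E \<longleftrightarrow> finite V \<and> (\<forall>x y. E x y \<longrightarrow> x \<in> V \<and> y \<in> V) \<and>
     (\<forall>x y. E x y \<longrightarrow> E y x) \<and> (\<forall>x. \<not> E x x)"

definition compl_adj :: "('a \<Rightarrow> 'a \<Rightarrow> bool) \<Rightarrow> 'a \<Rightarrow> 'a \<Rightarrow> bool" where
  "compl_adj E x y \<longleftrightarrow> x \<noteq> y \<and> \<not> E x y"

text \<open>A hole in the induced subgraph on S, given as the cyclic list of its vertices
  p_1,...,p_n (list index i corresponds to p_(i+1)): an induced cycle of length at least 4.\<close>
definition hole_in :: "'a set \<Rightarrow> ('a \<Rightarrow> 'a \<Rightarrow> bool) \<Rightarrow> 'a list \<Rightarrow> bool" where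
  "hole_in S E cs \<longleftrightarrow> length cs \<ge> 4 \<and> distinct cs \<and> set cs \<subseteq> S \<and>
     (\<forall>i < length cs. \<forall>j < length cs.
        E (cs ! i) (cs ! j) \<longleftrightarrow> (j = Suc i mod length cs \<or> i = Suc j mod length cs))"

definition antihole_in :: "'a set \<Rightarrow> ('a \<Rightarrow> 'a \<Rightarrow> bool) \<Rightarrow> 'a list \<Rightarrow> bool" where
  "antihole_in S E cs \<longleftrightarrow> hole_in S (compl_adj E) cs"

definition berge :: "'a set \<Rightarrow> ('a \<Rightarrow> 'a \<Rightarrow> bool) \<Rightarrow> bool" where
  "berge V E \<longleftrightarrow> simple_graph V E \<and>
     (\<forall>cs. hole_in V E cs \<longrightarrow> even (length cs)) \<and>
     (\<forall>cs. antihole_in V E cs \<longrightarrow> even (length cs))"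

definition anticonnected :: "('a \<Rightarrow> 'a \<Rightarrow> bool) \<Rightarrow> 'a set \<Rightarrow> bool" where
  "anticonnected E X \<longleftrightarrow> X \<noteq> {} \<and>
     (\<forall>x\<in>X. \<forall>y\<in>X. (\<lambda>a b. a \<in> X \<and> b \<in> X \<and> compl_adj E a b)\<^sup>*\<^sup>* x y)"

definition complete_to :: "('a \<Rightarrow> 'a \<Rightarrow> bool) \<Rightarrow> 'a set \<Rightarrow> 'a \<Rightarrow> bool" where
  "complete_to E X w \<longleftrightarrow> (\<forall>x\<in>X. E w x)"

end

(*
  Together with the theorem we prove, for every anticonnected X, that consecutive
  X-complete vertices of a hole in G - X with at least three X-complete vertices are adjacent or
  at even distance along the hole; both statements are proved by induction on |X|.

  In a minimal counterexample c_0 and c_t are consecutive X-complete vertices of the hole with t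
  odd and t >= 3. Let x be a vertex whose removal leaves X anticonnected. By the induction
  hypothesis for X - {x}, applied to holes through x, every gap between consecutive neighbours of
  x on c_0 ... c_t contains an even number of adjacent pairs of (X - {x})-complete vertices, while
  in total their number has the parity of t. Hence X - {x} is complete to c_1 or to c_(t-1), and
  each alternative holds for at most one x. So the complement of G|X has only two non-cut vertices
  and is an induced path whose ends satisfy different alternatives; the positions complete to X
  minus one end and to X minus the other end then interleave with even gaps, forcing t even.
*)

theory Submission
  imports Defs
begin

section \<open>Induced paths and holes\<close>

lemma set_tl_distinct: "distinct xs \<Longrightarrow> set (tl xs) = set xs - {hd xs}"
  by (cases xs) auto

lemma set_butlast_distinct:
  assumes "distinct xs" shows "set (butlast xs) = set xs - {last xs}"
proof (cases "xs = []")
  case False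
  then have xs: "xs = butlast xs @ [last xs]" by simp
  then have "distinct (butlast xs @ [last xs])" using assms by simp
  then have "last xs \<notin> set (butlast xs)" by simp
  moreover have "set xs = insert (last xs) (set (butlast xs))" using arg_cong[OF xs, of set] by simp
  ultimately show ?thesis by auto
qed simp

lemma not_adj_outside_pattern:
  assumes d: "distinct L" and P: "\<forall>i<length L. R w (L!i) \<longleftrightarrow> P i" and v: "v \<in> set L"
    and o: "\<And>i. i < length L \<Longrightarrow> P i \<Longrightarrow> L!i \<noteq> v"
  shows "\<not> R w v"
proof -
  obtain j where j: "j < length L" "L!j = v" using v by (metis in_set_conv_nth)
  then have "\<not> P j" using o by blast
  then show ?thesis using P j by auto
qed

definition induced_path :: "('a \<Rightarrow> 'a \<Rightarrow> bool) \<Rightarrow> 'a list \<Rightarrow> bool" where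
  "induced_path R ps \<longleftrightarrow> distinct ps \<and>
     (\<forall>i<length ps. \<forall>j<length ps. R (ps!i) (ps!j) \<longleftrightarrow> (j = Suc i \<or> i = Suc j))"

lemma induced_path_rev: "induced_path R ps \<Longrightarrow> induced_path R (rev ps)"
  unfolding induced_path_def by (auto simp: rev_nth)

lemma induced_path_tl: "induced_path R ps \<Longrightarrow> induced_path R (tl ps)"
  unfolding induced_path_def by (auto simp: nth_tl distinct_tl)

lemma induced_path_butlast: "induced_path R ps \<Longrightarrow> induced_path R (butlast ps)"
  unfolding induced_path_def by (simp add: nth_butlast distinct_butlast)

lemma induced_path_snoc:
  assumes sym: "\<And>a b. R a b \<Longrightarrow> R b a" and p: "induced_path R ps" and ne: "ps \<noteq> []"
    and v: "v \<notin> set ps" "\<not> R v v" and last: "R (last ps) v"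
    and others: "\<And>u. u \<in> set (butlast ps) \<Longrightarrow> \<not> R u v"
  shows "induced_path R (ps @ [v])"
proof -
  have last_nth: "last ps = ps ! (length ps - 1)" using ne by (simp add: last_conv_nth)
  have others_nth: "\<not> R (ps ! k) v \<and> \<not> R v (ps ! k)" if "k < length ps - 1" for k
    using others[of "ps ! k"] sym that by (metis length_butlast nth_butlast nth_mem)
  have "R ((ps @ [v]) ! i) ((ps @ [v]) ! j) \<longleftrightarrow> (j = Suc i \<or> i = Suc j)"
    if "i < Suc (length ps)" "j < Suc (length ps)" for i j
    using that p v last last_nth others_nth[of i] others_nth[of j] sym[of "last ps" v] ne
    unfolding induced_path_def
    by (cases "i < length ps"; cases "j < length ps"; cases "i = length ps - 1"; cases "j = length ps - 1")
       (auto simp: nth_append)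
  then show ?thesis using p v unfolding induced_path_def by auto
qed

lemma hole_in_iff:
  "hole_in S R cs \<longleftrightarrow> 4 \<le> length cs \<and> distinct cs \<and> set cs \<subseteq> S \<and>
     (\<forall>i<length cs. \<forall>j<length cs. R (cs!i) (cs!j) \<longleftrightarrow>
        (j = Suc i \<or> i = Suc j \<or> (i = 0 \<and> j = length cs - 1) \<or> (j = 0 \<and> i = length cs - 1)))"
proof (cases "4 \<le> length cs")
  case True
  have "(j = Suc i mod length cs \<or> i = Suc j mod length cs) \<longleftrightarrow>
        (j = Suc i \<or> i = Suc j \<or> (i = 0 \<and> j = length cs - 1) \<or> (j = 0 \<and> i = length cs - 1))"
    if "i < length cs" "j < length cs" for i j
    using that True by (auto simp: mod_Suc)
  then show ?thesis unfolding hole_in_def by simp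
qed (simp add: hole_in_def)

lemma hole_adj:
  assumes "hole_in S R cs" "i < length cs" "j < length cs"
  shows "R (cs!i) (cs!j) \<longleftrightarrow>
    (j = Suc i \<or> i = Suc j \<or> (i = 0 \<and> j = length cs - 1) \<or> (j = 0 \<and> i = length cs - 1))"
  using assms unfolding hole_in_iff by blast

lemma hole_in_mono: "hole_in S R cs \<Longrightarrow> S \<subseteq> T \<Longrightarrow> hole_in T R cs"
  unfolding hole_in_def by auto

lemma hole_in_set: "hole_in S R cs \<Longrightarrow> set cs \<subseteq> S"
  unfolding hole_in_def by simp

lemma hole_nth_eq_iff:
  "hole_in S R cs \<Longrightarrow> i < length cs \<Longrightarrow> j < length cs \<Longrightarrow> cs!i = cs!j \<longleftrightarrow> i = j"
  unfolding hole_in_def using nth_eq_iff_index_eq by blast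

lemma hole_in_rotate: "hole_in S R cs \<Longrightarrow> hole_in S R (rotate m cs)"
proof -
  assume h: "hole_in S R cs"
  let ?n = "length cs"
  have "R (cs ! ((m + i) mod ?n)) (cs ! ((m + j) mod ?n)) \<longleftrightarrow> (j = Suc i mod ?n \<or> i = Suc j mod ?n)"
    if "i < ?n" "j < ?n" for i j
  proof -
    have "R (cs ! ((m + i) mod ?n)) (cs ! ((m + j) mod ?n)) \<longleftrightarrow>
        ((m + j) mod ?n = Suc ((m + i) mod ?n) mod ?n \<or> (m + i) mod ?n = Suc ((m + j) mod ?n) mod ?n)"
    proof -
      have "0 < ?n" using that by linarith
      then have "(m + i) mod ?n < ?n" "(m + j) mod ?n < ?n" by simp_all
      then show ?thesis using h unfolding hole_in_def by blast
    qed
    also have "\<dots> \<longleftrightarrow> ((m + j) mod ?n = (m + Suc i) mod ?n \<or> (m + i) mod ?n = (m + Suc j) mod ?n)"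
      by (simp add: mod_Suc_eq)
    also have "\<dots> \<longleftrightarrow> (j mod ?n = Suc i mod ?n \<or> i mod ?n = Suc j mod ?n)"
      by (simp add: nat_mod_eq_iff)
    finally show ?thesis using that by simp
  qed
  then show ?thesis using h unfolding hole_in_def by (auto simp: nth_rotate)
qed

lemma hole_in_Cons:
  assumes sym: "\<And>a b. R a b \<Longrightarrow> R b a" and p: "induced_path R ps" and len: "3 \<le> length ps"
    and u: "u \<notin> set ps" "\<not> R u u" and ends: "R u (hd ps)" "R u (last ps)"
    and inner: "\<And>v. v \<in> set ps \<Longrightarrow> v \<noteq> hd ps \<Longrightarrow> v \<noteq> last ps \<Longrightarrow> \<not> R u v"
    and S: "set (u # ps) \<subseteq> S"
  shows "hole_in S R (u # ps)"
proof -
  have ne: "ps \<noteq> []" using len by auto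
  have d: "distinct ps" using p unfolding induced_path_def by simp
  have adj_u: "R u (ps ! k) \<longleftrightarrow> k = 0 \<or> k = length ps - 1" if "k < length ps" for k
  proof -
    have "ps ! k = hd ps \<longleftrightarrow> k = 0" "ps ! k = last ps \<longleftrightarrow> k = length ps - 1"
      using that ne nth_eq_iff_index_eq[OF d] by (auto simp: hd_conv_nth last_conv_nth)
    then show ?thesis using inner[of "ps ! k"] ends that by (metis nth_mem)
  qed
  have adj_u': "R (ps ! k) u \<longleftrightarrow> k = 0 \<or> k = length ps - 1" if "k < length ps" for k
    using adj_u[OF that] sym by blast
  have "R ((u # ps) ! i) ((u # ps) ! j) \<longleftrightarrow>
      (j = Suc i \<or> i = Suc j \<or> (i = 0 \<and> j = length ps) \<or> (j = 0 \<and> i = length ps))"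
    if "i < Suc (length ps)" "j < Suc (length ps)" for i j
  proof (cases i; cases j)
    fix i' j' assume "i = Suc i'" "j = Suc j'"
    then show ?thesis using that p unfolding induced_path_def by auto
  qed (use that len adj_u adj_u' u(2) in auto)
  then show ?thesis using len d u S unfolding hole_in_iff by auto
qed

definition segment :: "'a list \<Rightarrow> nat \<Rightarrow> nat \<Rightarrow> 'a list" where
  "segment cs i j = map (\<lambda>k. cs ! (i + k)) [0..<Suc j - i]"

lemma length_segment [simp]: "length (segment cs i j) = Suc j - i"
  by (simp add: segment_def)

lemma nth_segment: "p < Suc j - i \<Longrightarrow> segment cs i j ! p = cs ! (i + p)"
  by (simp add: segment_def)

lemma hd_segment: "i \<le> j \<Longrightarrow> hd (segment cs i j) = cs ! i"
  by (simp add: segment_def hd_map)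

lemma last_segment: "i \<le> j \<Longrightarrow> last (segment cs i j) = cs ! j"
  by (simp add: segment_def last_map)

lemma set_segment: "set (segment cs i j) = (\<lambda>k. cs ! k) ` {i..j}"
proof -
  have "(\<lambda>k. cs ! (i + k)) ` {0..<Suc j - i} = (\<lambda>k. cs ! k) ` {i..j}"
  proof (intro equalityI subsetI)
    fix x assume "x \<in> (\<lambda>k. cs ! k) ` {i..j}"
    then obtain k where "i \<le> k" "k \<le> j" "x = cs ! k" by auto
    then show "x \<in> (\<lambda>k. cs ! (i + k)) ` {0..<Suc j - i}" by (auto intro!: image_eqI[of _ _ "k - i"])
  qed auto
  then show ?thesis by (simp add: segment_def)
qed

lemma in_set_segment: "i \<le> k \<Longrightarrow> k \<le> j \<Longrightarrow> cs ! k \<in> set (segment cs i j)"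
  by (auto simp: set_segment)

lemma set_butlast_segment: "i < j \<Longrightarrow> set (butlast (segment cs i j)) = (\<lambda>k. cs ! k) ` {i..<j}"
proof -
  assume "i < j"
  then have "segment cs i j = segment cs i (j - 1) @ [cs ! j]"
    unfolding segment_def by (simp add: Suc_diff_le)
  then show ?thesis using \<open>i < j\<close> by (auto simp: set_segment)
qed

lemma induced_path_segment:
  assumes h: "hole_in S R cs" and ij: "i \<le> j" "j < length cs" and not_all: "\<not> (i = 0 \<and> j = length cs - 1)"
  shows "induced_path R (segment cs i j)"
proof -
  have "distinct (segment cs i j)"
    using h ij unfolding segment_def hole_in_def
    by (auto intro!: distinct_map[THEN iffD2] simp: inj_on_def nth_eq_iff_index_eq)
  moreover have "R (segment cs i j ! p) (segment cs i j ! q) \<longleftrightarrow> (q = Suc p \<or> p = Suc q)"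
    if "p < Suc j - i" "q < Suc j - i" for p q
    using hole_adj[OF h, of "i + p" "i + q"] that ij not_all by (auto simp: nth_segment)
  ultimately show ?thesis unfolding induced_path_def by simp
qed

section \<open>Consecutive pairs in sets of positions\<close>

definition consec_pairs :: "nat set \<Rightarrow> nat \<Rightarrow> nat \<Rightarrow> nat" where
  "consec_pairs K l r = card {i. l \<le> i \<and> i < r \<and> i \<in> K \<and> Suc i \<in> K}"

definition even_gaps :: "nat set \<Rightarrow> nat \<Rightarrow> bool" where
  "even_gaps K t \<longleftrightarrow> (\<forall>c\<in>K. \<forall>c'\<in>K. c < c' \<longrightarrow> c' \<le> t \<longrightarrow> (\<forall>i. c < i \<longrightarrow> i < c' \<longrightarrow> i \<notin> K) \<longrightarrow>
      c' = Suc c \<or> even (c' - c))"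

lemma even_gapsD:
  "even_gaps K t \<Longrightarrow> c \<in> K \<Longrightarrow> c' \<in> K \<Longrightarrow> c < c' \<Longrightarrow> c' \<le> t \<Longrightarrow>
    (\<And>i. c < i \<Longrightarrow> i < c' \<Longrightarrow> i \<notin> K) \<Longrightarrow> c' = Suc c \<or> even (c' - c)"
  unfolding even_gaps_def by blast

lemma consecutive_induct [consumes 4, case_names base step]:
  fixes A :: "nat set"
  assumes "r \<in> A" "l \<in> A" "l \<le> r" "r \<le> t" and base: "P l"
    and step: "\<And>c r. c \<in> A \<Longrightarrow> r \<in> A \<Longrightarrow> l \<le> c \<Longrightarrow> c < r \<Longrightarrow> r \<le> t \<Longrightarrow>
      (\<And>i. c < i \<Longrightarrow> i < r \<Longrightarrow> i \<notin> A) \<Longrightarrow> P c \<Longrightarrow> P r"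
  shows "P r"
  using assms(1,3,4)
proof (induction r rule: less_induct)
  case (less r)
  show ?case
  proof (cases "r = l")
    case False
    let ?M = "{i \<in> A. l \<le> i \<and> i < r}"
    have fin: "finite ?M" by (rule finite_subset[of _ "{..<r}"]) auto
    have ne: "?M \<noteq> {}" using assms(2) less.prems False by auto
    define c where "c = Max ?M"
    have c: "c \<in> A" "l \<le> c" "c < r" using Max_in[OF fin ne] unfolding c_def by auto
    have gap: "\<And>i. c < i \<Longrightarrow> i < r \<Longrightarrow> i \<notin> A"
      using Max_ge[OF fin] c unfolding c_def by fastforce
    show ?thesis by (rule step[OF c(1) less.prems(1) c(2,3) less.prems(3) gap less.IH]) (use c less.prems in auto)
  qed (use base in simp)
qed

lemma consec_pairs_split:
  assumes "l \<le> m" "m \<le> r" shows "consec_pairs K l r = consec_pairs K l m + consec_pairs K m r"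
proof -
  have "{i. l \<le> i \<and> i < r \<and> i \<in> K \<and> Suc i \<in> K} =
        {i. l \<le> i \<and> i < m \<and> i \<in> K \<and> Suc i \<in> K} \<union> {i. m \<le> i \<and> i < r \<and> i \<in> K \<and> Suc i \<in> K}"
    using assms by auto
  moreover have "finite {i. l \<le> i \<and> i < m \<and> i \<in> K \<and> Suc i \<in> K}"
    by (rule finite_subset[of _ "{..<m}"]) auto
  moreover have "finite {i. m \<le> i \<and> i < r \<and> i \<in> K \<and> Suc i \<in> K}"
    by (rule finite_subset[of _ "{..<r}"]) auto
  ultimately show ?thesis unfolding consec_pairs_def by (simp add: card_Un_disjoint disjoint_iff)
qed

lemma consec_pairs_empty: "r \<le> l \<Longrightarrow> consec_pairs K l r = 0"
  unfolding consec_pairs_def by auto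

lemma consec_pairs_gap:
  assumes "c \<in> K" "c < r" "r \<in> K" "\<And>i. c < i \<Longrightarrow> i < r \<Longrightarrow> i \<notin> K"
  shows "consec_pairs K c r = (if r = Suc c then 1 else 0)"
proof -
  have "{i. c \<le> i \<and> i < r \<and> i \<in> K \<and> Suc i \<in> K} = (if r = Suc c then {c} else {})"
    using assms by (auto simp: le_less)
  then show ?thesis unfolding consec_pairs_def by simp
qed

lemma consec_pairs_restrict:
  assumes "a \<le> a'" "a' \<le> b'" "b' \<le> b"
    and "\<And>i. i \<in> K \<Longrightarrow> a \<le> i \<Longrightarrow> i \<le> b \<Longrightarrow> a' \<le> i \<and> i \<le> b'"
  shows "consec_pairs K a b = consec_pairs K a' b'"
proof -
  have "{i. a \<le> i \<and> i < b \<and> i \<in> K \<and> Suc i \<in> K} = {i. a' \<le> i \<and> i < b' \<and> i \<in> K \<and> Suc i \<in> K}"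
    using assms by (auto dest: assms(4)[of "Suc _"])
  then show ?thesis unfolding consec_pairs_def by simp
qed

lemma consec_pairs_single:
  assumes "\<And>i. i \<in> K \<Longrightarrow> a \<le> i \<Longrightarrow> i \<le> b \<Longrightarrow> i = c"
  shows "consec_pairs K a b = 0"
proof -
  have "{i. a \<le> i \<and> i < b \<and> i \<in> K \<and> Suc i \<in> K} = {}"
    using assms[of "Suc _"] assms by fastforce
  then show ?thesis unfolding consec_pairs_def by simp
qed

text \<open>A gap of length one contributes one consecutive pair, an even gap none.\<close>
lemma even_gaps_parity:
  assumes g: "even_gaps K t" and lr: "l \<in> K" "r \<in> K" "l \<le> r" "r \<le> t"
  shows "even (r - l) \<longleftrightarrow> even (consec_pairs K l r)"
  using lr(2,1,3,4)
proof (induction rule: consecutive_induct)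
  case base then show ?case by (simp add: consec_pairs_empty)
next
  case (step c r)
  have pairs: "consec_pairs K l r = consec_pairs K l c + (if r = Suc c then 1 else 0)"
    using consec_pairs_split[of l c r K] consec_pairs_gap[OF step(1,4,2,6)] step(3,4) by simp
  consider "r = Suc c" | "even (r - c)" "r \<noteq> Suc c"
    using even_gapsD[OF g step(1,2,4,5,6)] by blast
  then show ?case
  proof cases
    case 1 then show ?thesis using pairs step(3,7) by simp
  next
    case 2
    moreover have "r - l = (r - c) + (c - l)" using step(3,4) by simp
    ultimately show ?thesis using pairs step(7) by simp
  qed
qed

lemma consec_pairs_even_by_gaps:
  assumes "r \<in> A" "s \<in> A" "s \<le> r" "r \<le> t"
    and gaps: "\<And>a b. a \<in> A \<Longrightarrow> b \<in> A \<Longrightarrow> s \<le> a \<Longrightarrow> a < b \<Longrightarrow> b \<le> t \<Longrightarrow>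
      (\<And>i. a < i \<Longrightarrow> i < b \<Longrightarrow> i \<notin> A) \<Longrightarrow> even (consec_pairs K a b)"
  shows "even (consec_pairs K s r)"
  using assms(1-4)
proof (induction rule: consecutive_induct)
  case base then show ?case by (simp add: consec_pairs_empty)
next
  case (step c r)
  then show ?case using consec_pairs_split[of s c r K] gaps[OF step(1-6)] by simp
qed

locale interleaved_even_gaps =
  fixes T1 T2 :: "nat set" and t :: nat
  assumes T1_sub: "T1 \<subseteq> {0<..<t}" and T2_sub: "T2 \<subseteq> {0<..<t}"
    and disjoint: "T1 \<inter> T2 = {}" and T1_ne: "T1 \<noteq> {}"
    and gaps1: "even_gaps (insert 0 (insert t T1)) t" and gaps2: "even_gaps (insert 0 (insert t T2)) t"
    and crossing: "\<And>i j. i \<in> T1 \<Longrightarrow> j \<in> T2 \<Longrightarrow>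
      (\<And>c. min i j < c \<Longrightarrow> c < max i j \<Longrightarrow> c \<notin> T1 \<and> c \<notin> T2) \<Longrightarrow> even (max i j - min i j)"
begin

abbreviation "K1 \<equiv> insert 0 (insert t T1)"
abbreviation "K2 \<equiv> insert 0 (insert t T2)"

context
  fixes a b assumes ab: "a \<in> K1" "b \<in> K1" "a < b" "b \<le> t"
    and gap: "\<And>i. a < i \<Longrightarrow> i < b \<Longrightarrow> i \<notin> K1"
begin

lemma gap_not_whole: "\<not> (a = 0 \<and> b = t)"
proof
  assume "a = 0 \<and> b = t"
  moreover obtain x where "x \<in> T1" using T1_ne by auto
  ultimately show False using gap[of x] T1_sub by auto
qed

lemma gap_ends: "a = 0 \<or> a \<in> T1" "b = t \<or> b \<in> T1" "a \<notin> T2" "b \<notin> T2"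
  using ab T1_sub T2_sub disjoint by auto

lemma gap_pairs_even_if_T2_free:
  assumes "T2 \<inter> {a<..<b} = {}" shows "even (consec_pairs K2 a b)"
proof -
  have "consec_pairs K2 a b = 0"
  proof (cases "a = 0")
    case True
    show ?thesis by (rule consec_pairs_single[of K2 a b 0])
      (use assms True gap_not_whole gap_ends ab T2_sub in \<open>auto simp: le_less\<close>)
  next
    case False
    show ?thesis by (rule consec_pairs_single[of K2 a b t])
      (use assms False gap_ends ab T2_sub T1_sub in \<open>auto simp: le_less\<close>)
  qed
  then show ?thesis by simp
qed

lemma gap_pairs_shrink:
  assumes f: "f \<in> T2" "a < f" and l: "l \<in> T2" "l < b" and fl: "f \<le> l"
    and outer: "\<And>x. x \<in> T2 \<Longrightarrow> a < x \<Longrightarrow> x < b \<Longrightarrow> f \<le> x \<and> x \<le> l"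
  shows "consec_pairs K2 a b = consec_pairs K2 (if a = 0 then 0 else f) (if b = t then t else l)"
proof (rule consec_pairs_restrict)
  show "a \<le> (if a = 0 then 0 else f)" "(if a = 0 then 0 else f) \<le> (if b = t then t else l)"
    "(if b = t then t else l) \<le> b" using f l fl ab T2_sub by auto
  fix i assume i: "i \<in> K2" "a \<le> i" "i \<le> b"
  show "(if a = 0 then 0 else f) \<le> i \<and> i \<le> (if b = t then t else l)"
  proof (cases "i \<in> T2")
    case True
    then show ?thesis using outer[of i] i gap_ends by (auto simp: le_less)
  next
    case False
    then show ?thesis using i ab gap_not_whole gap_ends T1_sub f l fl by auto
  qed
qed

text \<open>Shrink \<open>[a, b]\<close> to the outermost elements \<open>f \<le> l\<close> of \<open>T2\<close> inside it (keeping the ends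
  \<open>0\<close> and \<open>t\<close>); both shrinking steps are even by the crossing hypothesis.\<close>
lemma gap_pairs_even_if_T2_meets:
  assumes M: "T2 \<inter> {a<..<b} \<noteq> {}" shows "even (consec_pairs K2 a b)"
proof -
  let ?M = "T2 \<inter> {a<..<b}"
  define f where "f = Min ?M"
  define l where "l = Max ?M"
  have f: "f \<in> T2" "a < f" "f < b" "\<And>x. x \<in> ?M \<Longrightarrow> f \<le> x"
    using Min_in[OF _ M] Min_le[of ?M] unfolding f_def by auto
  have l: "l \<in> T2" "a < l" "l < b" "\<And>x. x \<in> ?M \<Longrightarrow> x \<le> l"
    using Max_in[OF _ M] Max_ge[of ?M] unfolding l_def by auto
  define a' where "a' = (if a = 0 then 0 else f)"
  define b' where "b' = (if b = t then t else l)"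
  have same: "consec_pairs K2 a b = consec_pairs K2 a' b'"
    unfolding a'_def b'_def by (rule gap_pairs_shrink) (use f l in auto)
  have "b = Suc a \<or> even (b - a)" by (rule even_gapsD[OF gaps1 ab gap])
  then have "even (b - a)" using f by auto
  moreover have "even (a' - a)"
  proof (cases "a = 0")
    case False
    have "even (max a f - min a f)"
    proof (rule crossing)
      show "a \<in> T1" using False gap_ends(1) by simp
      fix c assume "min a f < c" "c < max a f"
      then show "c \<notin> T1 \<and> c \<notin> T2" using gap[of c] f(2,3) f(4)[of c] by auto
    qed (rule f(1))
    then show ?thesis using False f unfolding a'_def by simp
  qed (simp add: a'_def)
  moreover have "even (b - b')"
  proof (cases "b = t")
    case False
    have "even (max b l - min b l)"
    proof (rule crossing)
      show "b \<in> T1" using False gap_ends(2) by simp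
      fix c assume "min b l < c" "c < max b l"
      then show "c \<notin> T1 \<and> c \<notin> T2" using gap[of c] l(2,3) l(4)[of c] by auto
    qed (rule l(1))
    then show ?thesis using False l unfolding b'_def by simp
  qed (simp add: b'_def)
  moreover have "a \<le> a'" "a' \<le> b'" "b' \<le> b" using f l ab f(4)[of l] unfolding a'_def b'_def by auto
  moreover have "even (b' - a') \<longleftrightarrow> even (consec_pairs K2 a' b')"
    by (rule even_gaps_parity[OF gaps2]) (use calculation ab f l in \<open>auto simp: a'_def b'_def\<close>)
  ultimately show ?thesis using same by presburger
qed

end

lemma even_t: "even t"
proof -
  have t0: "0 < t" using T1_ne T1_sub by auto
  have "even (consec_pairs K2 0 t)"
  proof (rule consec_pairs_even_by_gaps[of t K1 0 t])
    fix a b assume ab: "a \<in> K1" "b \<in> K1" "0 \<le> a" "a < b" "b \<le> t"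
      and gap: "\<And>i. a < i \<Longrightarrow> i < b \<Longrightarrow> i \<notin> K1"
    show "even (consec_pairs K2 a b)"
    proof (cases "T2 \<inter> {a<..<b} = {}")
      case True
      show ?thesis using gap_pairs_even_if_T2_free[OF ab(1,2,4,5) gap True] by simp
    next
      case False
      show ?thesis using gap_pairs_even_if_T2_meets[OF ab(1,2,4,5) gap False] by simp
    qed
  qed simp_all
  moreover have "even (t - 0) \<longleftrightarrow> even (consec_pairs K2 0 t)"
    by (rule even_gaps_parity[OF gaps2]) auto
  ultimately show ?thesis by simp
qed

end

section \<open>Connectivity and non-cut vertices\<close>

definition restrict_rel :: "('a \<Rightarrow> 'a \<Rightarrow> bool) \<Rightarrow> 'a set \<Rightarrow> 'a \<Rightarrow> 'a \<Rightarrow> bool" where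
  "restrict_rel G Y a b \<longleftrightarrow> a \<in> Y \<and> b \<in> Y \<and> G a b"

definition connected_on :: "('a \<Rightarrow> 'a \<Rightarrow> bool) \<Rightarrow> 'a set \<Rightarrow> bool" where
  "connected_on G Y \<longleftrightarrow> Y \<noteq> {} \<and> (\<forall>x\<in>Y. \<forall>y\<in>Y. (restrict_rel G Y)\<^sup>*\<^sup>* x y)"

lemma anticonnected_iff_connected_on: "anticonnected E Y \<longleftrightarrow> connected_on (compl_adj E) Y"
  unfolding anticonnected_def connected_on_def restrict_rel_def by simp

lemma restrict_rel_rtranclp_mono:
  "(restrict_rel G Y)\<^sup>*\<^sup>* a b \<Longrightarrow> Y \<subseteq> Z \<Longrightarrow> (restrict_rel G Z)\<^sup>*\<^sup>* a b"
proof (induction rule: rtranclp_induct)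
  case (step y z)
  then show ?case by (metis restrict_rel_def rtranclp.rtrancl_into_rtrancl subsetD)
qed simp

lemma relpowp_imp_walk:
  "(R ^^ n) x y \<Longrightarrow> \<exists>xs. length xs = Suc n \<and> xs ! 0 = x \<and> xs ! n = y \<and> (\<forall>i<n. R (xs ! i) (xs ! Suc i))"
proof (induction n arbitrary: y)
  case 0 then show ?case by (intro exI[of _ "[x]"]) simp
next
  case (Suc n)
  from Suc.prems obtain z where z: "(R ^^ n) x z" "R z y" by auto
  from Suc.IH[OF z(1)] obtain xs where xs: "length xs = Suc n" "xs ! 0 = x" "xs ! n = z"
    "\<forall>i<n. R (xs ! i) (xs ! Suc i)" by blast
  have "\<forall>i<Suc n. R ((xs @ [y]) ! i) ((xs @ [y]) ! Suc i)"
    using xs z by (auto simp: nth_append less_Suc_eq)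
  then show ?case using xs by (intro exI[of _ "xs @ [y]"]) (simp add: nth_append)
qed

lemma walk_imp_relpowp:
  assumes "\<forall>i<n. R (xs ! i) (xs ! Suc i)" "i \<le> j" "j \<le> n"
  shows "(R ^^ (j - i)) (xs ! i) (xs ! j)"
  using assms(2,3)
proof (induction j)
  case (Suc j)
  show ?case
  proof (cases "i = Suc j")
    case False
    then have "(R ^^ (j - i)) (xs ! i) (xs ! j)" "R (xs ! j) (xs ! Suc j)" using Suc assms(1) by auto
    then have "(R ^^ Suc (j - i)) (xs ! i) (xs ! Suc j)" by auto
    then show ?thesis using False Suc.prems by (simp add: Suc_diff_le)
  qed simp
qed simp

locale undirected =
  fixes G :: "'a \<Rightarrow> 'a \<Rightarrow> bool"
  assumes sym: "G a b \<Longrightarrow> G b a" and irrefl: "\<not> G a a"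
begin

lemma restrict_rel_rtranclp_sym: "(restrict_rel G Y)\<^sup>*\<^sup>* a b \<Longrightarrow> (restrict_rel G Y)\<^sup>*\<^sup>* b a"
proof (induction rule: rtranclp_induct)
  case (step y z)
  then have "restrict_rel G Y z y" using sym unfolding restrict_rel_def by blast
  then show ?case using step.IH by (rule converse_rtranclp_into_rtranclp)
qed simp

lemma connected_on_induced_path:
  assumes p: "induced_path G qs" and ne: "qs \<noteq> []"
  shows "connected_on G (set qs)"
proof -
  have reach: "(restrict_rel G (set qs))\<^sup>*\<^sup>* (qs ! 0) (qs ! j)" if "j < length qs" for j
    using that
  proof (induction j)
    case (Suc j)
    then have "restrict_rel G (set qs) (qs ! j) (qs ! Suc j)"
      using p unfolding induced_path_def restrict_rel_def by auto
    then show ?case using Suc by (meson Suc_lessD rtranclp.rtrancl_into_rtrancl)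
  qed simp
  show ?thesis unfolding connected_on_def
  proof (intro conjI ballI)
    fix x y assume "x \<in> set qs" "y \<in> set qs"
    then obtain i j where "i < length qs" "j < length qs" "x = qs ! i" "y = qs ! j"
      by (metis in_set_conv_nth)
    then show "(restrict_rel G (set qs))\<^sup>*\<^sup>* x y"
      using reach restrict_rel_rtranclp_sym by (meson rtranclp_trans)
  qed (use ne in simp)
qed

lemma minimal_walk_induced_path:
  assumes len: "length xs = Suc n" and inY: "set xs \<subseteq> Y" and walk: "\<forall>i<n. restrict_rel G Y (xs ! i) (xs ! Suc i)"
    and min: "\<And>m. (restrict_rel G Y ^^ m) (xs ! 0) (xs ! n) \<Longrightarrow> n \<le> m"
  shows "induced_path G xs"
proof -
  let ?R = "restrict_rel G Y"
  have no_shortcut: "j - i \<le> k" if "(?R ^^ k) (xs ! i) (xs ! j)" "i \<le> j" "j \<le> n" for i j k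
  proof -
    have "(?R ^^ i) (xs ! 0) (xs ! i)" "(?R ^^ (n - j)) (xs ! j) (xs ! n)"
      using walk_imp_relpowp[OF walk, of 0 i] walk_imp_relpowp[OF walk, of j n] that by auto
    then have "(?R ^^ (i + k + (n - j))) (xs ! 0) (xs ! n)"
      using that(1) unfolding relpowp_add by blast
    then show ?thesis using min that by fastforce
  qed
  have "distinct xs"
  proof (rule ccontr)
    assume "\<not> distinct xs"
    then obtain i j where "i \<le> n" "j \<le> n" "i \<noteq> j" "xs ! i = xs ! j"
      using len by (auto simp: distinct_conv_nth less_Suc_eq_le)
    then show False using no_shortcut[of 0 i j] no_shortcut[of 0 j i] by (cases "i < j") auto
  qed
  moreover have "G (xs ! i) (xs ! j) \<longleftrightarrow> (j = Suc i \<or> i = Suc j)" if "i \<le> n" "j \<le> n" for i j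
  proof
    assume e: "G (xs ! i) (xs ! j)"
    have "j - i \<le> 1" "i - j \<le> 1"
    proof -
      have "xs ! i \<in> Y" "xs ! j \<in> Y" using inY that len by auto
      then show "j - i \<le> 1" "i - j \<le> 1"
        using no_shortcut[of 1 i j, unfolded relpowp_1] no_shortcut[of 1 j i, unfolded relpowp_1]
          e sym[OF e] that by (auto simp: restrict_rel_def) presburger+
    qed
    then show "j = Suc i \<or> i = Suc j" using e irrefl by (cases "i = j") auto
  next
    assume "j = Suc i \<or> i = Suc j"
    then show "G (xs ! i) (xs ! j)" using walk that sym unfolding restrict_rel_def by auto
  qed
  ultimately show ?thesis unfolding induced_path_def using len by simp
qed

lemma exists_induced_path:
  assumes c: "connected_on G Y" and xy: "x \<in> Y" "y \<in> Y"
  shows "\<exists>qs. induced_path G qs \<and> set qs \<subseteq> Y \<and> qs \<noteq> [] \<and> hd qs = x \<and> last qs = y"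
proof -
  let ?R = "restrict_rel G Y"
  obtain n0 where "(?R ^^ n0) x y" using c xy unfolding connected_on_def by (metis rtranclp_imp_relpowp)
  define n where "n = (LEAST n. (?R ^^ n) x y)"
  have "(?R ^^ n) x y" unfolding n_def by (rule LeastI[of _ n0]) fact
  then obtain xs where xs: "length xs = Suc n" "xs ! 0 = x" "xs ! n = y" "\<forall>i<n. ?R (xs ! i) (xs ! Suc i)"
    using relpowp_imp_walk by metis
  have "set xs \<subseteq> Y"
  proof
    fix v assume "v \<in> set xs"
    then obtain i where i: "i \<le> n" "v = xs ! i" using xs(1) by (metis in_set_conv_nth less_Suc_eq_le)
    show "v \<in> Y"
    proof (cases "i < n")
      case True then show ?thesis using xs(4) i unfolding restrict_rel_def by blast
    next
      case False then show ?thesis using xs(3) xy i by simp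
    qed
  qed
  moreover have "induced_path G xs"
    by (rule minimal_walk_induced_path[OF xs(1) calculation xs(4)]) (use xs(2,3) in \<open>simp add: n_def Least_le\<close>)
  moreover have "xs \<noteq> []" using xs(1) by auto
  ultimately show ?thesis using xs by (intro exI[of _ xs]) (auto simp: hd_conv_nth last_conv_nth)
qed

definition dist_to :: "'a set \<Rightarrow> 'a set \<Rightarrow> 'a \<Rightarrow> nat" where
  "dist_to Y S u = (LEAST n. \<exists>b\<in>S. (restrict_rel G Y ^^ n) u b)"

context
  fixes Y S assumes c: "connected_on G Y" and S: "S \<subseteq> Y" "S \<noteq> {}"
begin

lemma dist_to_attained: "u \<in> Y \<Longrightarrow> \<exists>b\<in>S. (restrict_rel G Y ^^ dist_to Y S u) u b"
proof -
  assume u: "u \<in> Y"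
  obtain b where b: "b \<in> S" using S by auto
  have "(restrict_rel G Y)\<^sup>*\<^sup>* u b" using c u b S unfolding connected_on_def by auto
  then obtain n where "(restrict_rel G Y ^^ n) u b" by (metis rtranclp_imp_relpowp)
  then have "\<exists>b\<in>S. (restrict_rel G Y ^^ n) u b" using b by blast
  then show ?thesis unfolding dist_to_def by (rule LeastI_ex[OF exI])
qed

lemma dist_to_le: "b \<in> S \<Longrightarrow> (restrict_rel G Y ^^ m) u b \<Longrightarrow> dist_to Y S u \<le> m"
  unfolding dist_to_def by (rule Least_le) blast

lemma dist_to_eq_0_iff: "u \<in> Y \<Longrightarrow> dist_to Y S u = 0 \<longleftrightarrow> u \<in> S"
  using dist_to_attained[of u] dist_to_le[of u 0 u] by auto

lemma dist_to_step:
  assumes "u \<in> Y" "dist_to Y S u = Suc m"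
  shows "\<exists>w. restrict_rel G Y u w \<and> dist_to Y S w \<le> m"
proof -
  obtain b where b: "b \<in> S" "(restrict_rel G Y ^^ Suc m) u b" using dist_to_attained assms by metis
  then obtain w where "restrict_rel G Y u w" "(restrict_rel G Y ^^ m) w b" using relpowp_Suc_D2 by metis
  then show ?thesis using dist_to_le[OF b(1)] by blast
qed

text \<open>Walking towards \<open>S\<close> never passes through a vertex at maximal distance from \<open>S\<close>.\<close>
lemma reach_avoiding_farthest:
  assumes v: "v \<in> Y" "v \<notin> S" and far: "\<And>u. u \<in> Y \<Longrightarrow> dist_to Y S u \<le> dist_to Y S v"
    and u: "u \<in> Y - {v}"
  shows "\<exists>b\<in>S. (restrict_rel G (Y - {v}))\<^sup>*\<^sup>* u b"
  using u
proof (induction "dist_to Y S u" arbitrary: u rule: less_induct)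
  case less
  show ?case
  proof (cases "dist_to Y S u")
    case 0 then show ?thesis using dist_to_eq_0_iff less.prems by auto
  next
    case (Suc m)
    obtain w where w: "restrict_rel G Y u w" "dist_to Y S w \<le> m" using dist_to_step less.prems Suc by blast
    have "w \<noteq> v" using w far[of u] less.prems Suc by auto
    then have wY: "w \<in> Y - {v}" using w unfolding restrict_rel_def by auto
    then have "\<exists>b\<in>S. (restrict_rel G (Y - {v}))\<^sup>*\<^sup>* w b" using less.hyps w Suc by auto
    moreover have "restrict_rel G (Y - {v}) u w" using w less.prems wY unfolding restrict_rel_def by auto
    ultimately show ?thesis by (meson converse_rtranclp_into_rtranclp)
  qed
qed

lemma exists_noncut_outside:
  assumes fin: "finite Y" and SY: "S \<noteq> Y"
    and S_conn: "\<And>v a b. v \<in> Y - S \<Longrightarrow> a \<in> S \<Longrightarrow> b \<in> S \<Longrightarrow> (restrict_rel G (Y - {v}))\<^sup>*\<^sup>* a b"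
  shows "\<exists>v\<in>Y - S. connected_on G (Y - {v})"
proof -
  have "Y \<noteq> {}" using S by auto
  then obtain v where v: "v \<in> Y" "dist_to Y S v = Max (dist_to Y S ` Y)"
    using Max_in[of "dist_to Y S ` Y"] fin by (metis finite_imageI image_iff image_is_empty)
  have far: "\<And>u. u \<in> Y \<Longrightarrow> dist_to Y S u \<le> dist_to Y S v" using v fin by simp
  obtain u where u: "u \<in> Y" "u \<notin> S" using S SY by auto
  then have vS: "v \<notin> S" using far[OF u(1)] dist_to_eq_0_iff[OF u(1)] dist_to_eq_0_iff[OF v(1)] by auto
  have "connected_on G (Y - {v})" unfolding connected_on_def
  proof (intro conjI ballI)
    fix a b assume "a \<in> Y - {v}" "b \<in> Y - {v}"
    then obtain sa sb where "sa \<in> S" "sb \<in> S" "(restrict_rel G (Y - {v}))\<^sup>*\<^sup>* a sa"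
      "(restrict_rel G (Y - {v}))\<^sup>*\<^sup>* b sb"
      using reach_avoiding_farthest[OF v(1) vS far] by meson
    moreover have "(restrict_rel G (Y - {v}))\<^sup>*\<^sup>* sa sb" using S_conn calculation(1,2) v(1) vS by blast
    ultimately show "(restrict_rel G (Y - {v}))\<^sup>*\<^sup>* a b"
      using restrict_rel_rtranclp_sym by (meson rtranclp_trans)
  qed (use S vS in auto)
  then show ?thesis using v vS by blast
qed

end

text \<open>Join two non-cut vertices by an induced path; if it misses a vertex, the vertex farthest
  from the path is a third non-cut vertex.\<close>
lemma three_noncut_or_induced_path:
  assumes c: "connected_on G Y" and fin: "finite Y" and ab: "a \<in> Y" "b \<in> Y" "a \<noteq> b"
  shows "(\<exists>u1 u2 u3. u1 \<in> Y \<and> u2 \<in> Y \<and> u3 \<in> Y \<and> u1 \<noteq> u2 \<and> u1 \<noteq> u3 \<and> u2 \<noteq> u3 \<and>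
           connected_on G (Y - {u1}) \<and> connected_on G (Y - {u2}) \<and> connected_on G (Y - {u3}))
       \<or> (\<exists>qs. induced_path G qs \<and> set qs = Y \<and> 2 \<le> length qs)"
proof -
  have noncut_other: "\<exists>v\<in>Y - {r}. connected_on G (Y - {v})" if r: "r \<in> Y" for r
    by (rule exists_noncut_outside[OF c _ _ fin]) (use r ab in \<open>auto simp: restrict_rel_def\<close>)
  obtain x1 where x1: "x1 \<in> Y" "x1 \<noteq> a" "connected_on G (Y - {x1})" using noncut_other[OF ab(1)] by blast
  obtain x2 where x2: "x2 \<in> Y" "x2 \<noteq> x1" "connected_on G (Y - {x2})" using noncut_other[OF x1(1)] by blast
  obtain qs where qs: "induced_path G qs" "set qs \<subseteq> Y" "qs \<noteq> []" "hd qs = x1" "last qs = x2"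
    using exists_induced_path[OF c x1(1) x2(1)] by blast
  show ?thesis
  proof (cases "set qs = Y")
    case True
    have "2 \<le> length qs" using qs x2 by (cases qs) (auto split: if_splits simp: Suc_le_eq)
    then show ?thesis using True qs by blast
  next
    case False
    have "connected_on G (set qs)" by (rule connected_on_induced_path[OF qs(1,3)])
    then have "\<exists>v\<in>Y - set qs. connected_on G (Y - {v})"
    proof (intro exists_noncut_outside[OF c qs(2) _ fin False])
      fix v a b assume "v \<in> Y - set qs" "a \<in> set qs" "b \<in> set qs"
      then show "(restrict_rel G (Y - {v}))\<^sup>*\<^sup>* a b"
        using \<open>connected_on G (set qs)\<close> qs(2) restrict_rel_rtranclp_mono[of G "set qs" a b "Y - {v}"]
        unfolding connected_on_def by auto
    qed (use qs(3) in simp)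
    then obtain v where v: "v \<in> Y" "v \<notin> set qs" "connected_on G (Y - {v})" by blast
    have "x1 \<noteq> v" "x2 \<noteq> v" using v qs by auto
    then show ?thesis using x1 x2 v by blast
  qed
qed

end

section \<open>Holes and antiholes in Berge graphs\<close>

lemma complete_toD: "complete_to E Y v \<Longrightarrow> y \<in> Y \<Longrightarrow> E v y"
  unfolding complete_to_def by blast

lemma complete_to_mono: "complete_to E Y v \<Longrightarrow> Y' \<subseteq> Y \<Longrightarrow> complete_to E Y' v"
  unfolding complete_to_def by blast

lemma complete_minus_unique:
  "\<not> complete_to E Y v \<Longrightarrow> complete_to E (Y - {x}) v \<Longrightarrow> complete_to E (Y - {x'}) v \<Longrightarrow> x = x'"
  unfolding complete_to_def by blast

locale berge_graph =
  fixes V :: "'a set" and E :: "'a \<Rightarrow> 'a \<Rightarrow> bool"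
  assumes berge: "berge V E"
begin

lemma sym: "E x y \<Longrightarrow> E y x"
  using berge unfolding berge_def simple_graph_def by blast

lemma irrefl: "\<not> E x x"
  using berge unfolding berge_def simple_graph_def by blast

lemma finite_V: "finite V"
  using berge unfolding berge_def simple_graph_def by blast

lemma nonadj_sym: "\<not> E a b \<Longrightarrow> \<not> E b a"
  using sym by blast

lemma compl_adj_sym: "compl_adj E x y \<Longrightarrow> compl_adj E y x"
  unfolding compl_adj_def using sym by blast

lemma compl_adj_irrefl: "\<not> compl_adj E x x"
  unfolding compl_adj_def by simp

lemma even_hole: "hole_in V E cs \<Longrightarrow> even (length cs)"
  using berge unfolding berge_def by blast

lemma even_antihole: "hole_in V (compl_adj E) cs \<Longrightarrow> even (length cs)"
  using berge unfolding berge_def antihole_in_def by blast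

lemma path_snoc:
  "induced_path E ps \<Longrightarrow> ps \<noteq> [] \<Longrightarrow> v \<notin> set ps \<Longrightarrow> E (last ps) v \<Longrightarrow>
    (\<And>u. u \<in> set (butlast ps) \<Longrightarrow> \<not> E u v) \<Longrightarrow> induced_path E (ps @ [v])"
  by (rule induced_path_snoc) (auto intro: sym simp: irrefl)

lemma antipath_snoc:
  assumes "induced_path (compl_adj E) ps" "ps \<noteq> []" "v \<notin> set ps" "\<not> E (last ps) v"
    "\<And>u. u \<in> set (butlast ps) \<Longrightarrow> E u v"
  shows "induced_path (compl_adj E) (ps @ [v])"
proof (rule induced_path_snoc[OF compl_adj_sym assms(1,2,3) compl_adj_irrefl])
  show "compl_adj E (last ps) v" using assms(2-4) unfolding compl_adj_def by auto
qed (use assms(5) in \<open>auto simp: compl_adj_def\<close>)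

lemma path_closure_odd:
  assumes "induced_path E ps" "3 \<le> length ps" "u \<notin> set ps" "set (u # ps) \<subseteq> V"
    "E u (hd ps)" "E u (last ps)" "\<And>v. v \<in> set ps \<Longrightarrow> v \<noteq> hd ps \<Longrightarrow> v \<noteq> last ps \<Longrightarrow> \<not> E u v"
  shows "odd (length ps)"
  using even_hole[OF hole_in_Cons[OF sym assms(1-3) irrefl assms(5-7) assms(4)]] by simp

lemma antipath_closure_odd:
  assumes p: "induced_path (compl_adj E) ps" and len: "3 \<le> length ps" and u: "u \<notin> set ps"
    and V: "set (u # ps) \<subseteq> V" and ends: "\<not> E u (hd ps)" "\<not> E u (last ps)"
    and inner: "\<And>v. v \<in> set ps \<Longrightarrow> v \<noteq> hd ps \<Longrightarrow> v \<noteq> last ps \<Longrightarrow> E u v"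
  shows "odd (length ps)"
proof -
  have "hd ps \<in> set ps" "last ps \<in> set ps" using len by (auto intro: hd_in_set last_in_set)
  then have "hole_in V (compl_adj E) (u # ps)"
    using u ends inner
    by (intro hole_in_Cons[OF compl_adj_sym p len u compl_adj_irrefl _ _ _ V])
      (auto simp: compl_adj_def)
  then show ?thesis using even_antihole by fastforce
qed

text \<open>The hole \<open>u - ps - w - c - u\<close>.\<close>
lemma path_closure_through_apex_odd:
  assumes p: "induced_path E ps" "ps \<noteq> []" and V: "set ps \<subseteq> V" "u \<in> V" "w \<in> V" "c \<in> V"
    and new: "u \<notin> set ps" "w \<notin> set ps" "c \<notin> set ps" "u \<noteq> w" "u \<noteq> c" "w \<noteq> c"
    and u: "E u (hd ps)" "\<And>v. v \<in> set ps \<Longrightarrow> v \<noteq> hd ps \<Longrightarrow> \<not> E u v"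
    and w: "E w (last ps)" "\<And>v. v \<in> set (butlast ps) \<Longrightarrow> \<not> E w v"
    and uw: "\<not> E u w" and c: "E c u" "E c w" "\<And>v. v \<in> set ps \<Longrightarrow> \<not> E c v"
  shows "odd (length ps)"
proof -
  have p1: "induced_path E (ps @ [w])"
    by (rule path_snoc[OF p new(2)]) (use w sym in auto)
  have p2: "induced_path E (ps @ [w, c])"
    using path_snoc[OF p1, of c] new c sym by (auto intro: sym)
  have "odd (length (ps @ [w, c]))"
    by (rule path_closure_odd[OF p2]) (use p new V u uw c sym in \<open>auto simp: butlast_append Suc_le_eq\<close>)
  then show ?thesis by simp
qed

text \<open>The antihole \<open>a - qs - b - a\<close>.\<close>
lemma antipath_closure_by_nonedge_even:
  assumes p: "induced_path (compl_adj E) qs" "2 \<le> length qs" and V: "set qs \<subseteq> V" "a \<in> V" "b \<in> V"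
    and new: "a \<notin> set qs" "b \<notin> set qs" "a \<noteq> b" and ab: "\<not> E a b"
    and a: "\<not> E a (hd qs)" "\<And>q. q \<in> set (tl qs) \<Longrightarrow> E a q"
    and b: "\<not> E b (last qs)" "\<And>q. q \<in> set (butlast qs) \<Longrightarrow> E b q"
  shows "even (length qs)"
proof -
  have ne: "qs \<noteq> []" using p by auto
  have d: "distinct qs" using p unfolding induced_path_def by simp
  have p1: "induced_path (compl_adj E) (qs @ [b])"
    by (rule antipath_snoc[OF p(1) ne new(2)]) (use b sym in blast)+
  have "odd (length (qs @ [b]))"
  proof (rule antipath_closure_odd[OF p1])
    fix v assume "v \<in> set (qs @ [b])" "v \<noteq> hd (qs @ [b])" "v \<noteq> last (qs @ [b])"
    then have "v \<in> set (tl qs)" using ne set_tl_distinct[OF d] by auto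
    then show "E a v" by (rule a(2))
  next
    show "3 \<le> length (qs @ [b])" using p(2) by simp
    show "a \<notin> set (qs @ [b])" "set (a # qs @ [b]) \<subseteq> V" using new V by auto
    show "\<not> E a (hd (qs @ [b]))" "\<not> E a (last (qs @ [b]))" using a(1) ab ne by simp_all
  qed
  then show ?thesis by simp
qed

text \<open>The antihole \<open>a - qs - b - c - a\<close>.\<close>
lemma antipath_closure_through_apex_odd:
  assumes p: "induced_path (compl_adj E) qs" "2 \<le> length qs"
    and V: "set qs \<subseteq> V" "a \<in> V" "b \<in> V" "c \<in> V"
    and new: "a \<notin> set qs" "b \<notin> set qs" "c \<notin> set qs" "a \<noteq> b" "c \<noteq> a" "c \<noteq> b"
    and ab: "E a b" and a: "\<not> E a (hd qs)" "\<And>q. q \<in> set (tl qs) \<Longrightarrow> E a q"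
    and b: "\<not> E b (last qs)" "\<And>q. q \<in> set (butlast qs) \<Longrightarrow> E b q"
    and c: "\<And>q. q \<in> set qs \<Longrightarrow> E c q" "\<not> E c a" "\<not> E c b"
  shows "odd (length qs)"
proof -
  have ne: "qs \<noteq> []" using p by auto
  have d: "distinct qs" using p unfolding induced_path_def by simp
  have p1: "induced_path (compl_adj E) (qs @ [b])"
    by (rule antipath_snoc[OF p(1) ne new(2)]) (use b sym in blast)+
  have p2: "induced_path (compl_adj E) (qs @ [b, c])"
  proof -
    have "\<not> E b c" "\<And>u. u \<in> set qs \<Longrightarrow> E u c" using c sym by blast+
    then show ?thesis using antipath_snoc[OF p1, of c] new by simp
  qed
  have "odd (length (qs @ [b, c]))"
  proof (rule antipath_closure_odd[OF p2])
    fix v assume "v \<in> set (qs @ [b, c])" "v \<noteq> hd (qs @ [b, c])" "v \<noteq> last (qs @ [b, c])"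
    then have "v = b \<or> v \<in> set (tl qs)" using ne set_tl_distinct[OF d] by auto
    then show "E a v" using ab a(2) by blast
  next
    show "3 \<le> length (qs @ [b, c])" using p(2) by simp
    show "a \<notin> set (qs @ [b, c])" "set (a # qs @ [b, c]) \<subseteq> V" using new V by auto
    show "\<not> E a (hd (qs @ [b, c]))" "\<not> E a (last (qs @ [b, c]))" using a(1) c(2) sym ne by auto
  qed
  then show ?thesis by simp
qed

text \<open>The antihole \<open>v1 - qs - v2 - v0 - v3 - v1\<close>, where \<open>v0 v1 v2 v3\<close> is an induced path of \<open>G\<close>.\<close>
lemma antipath_closure_through_P4_even:
  assumes p: "induced_path (compl_adj E) qs" "2 \<le> length qs"
    and V: "set qs \<subseteq> V" "v0 \<in> V" "v1 \<in> V" "v2 \<in> V" "v3 \<in> V"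
    and new: "v0 \<notin> set qs" "v1 \<notin> set qs" "v2 \<notin> set qs" "v3 \<notin> set qs"
    and dif: "v0 \<noteq> v1" "v0 \<noteq> v2" "v0 \<noteq> v3" "v1 \<noteq> v2" "v1 \<noteq> v3" "v2 \<noteq> v3"
    and e: "E v1 v0" "E v1 v2" "E v2 v3" "\<not> E v0 v2" "\<not> E v0 v3" "\<not> E v1 v3"
    and c03: "\<And>q. q \<in> set qs \<Longrightarrow> E v0 q \<and> E v3 q"
    and v1: "\<not> E v1 (hd qs)" "\<And>q. q \<in> set (tl qs) \<Longrightarrow> E v1 q"
    and v2: "\<not> E v2 (last qs)" "\<And>q. q \<in> set (butlast qs) \<Longrightarrow> E v2 q"
  shows "even (length qs)"
proof -
  have ne: "qs \<noteq> []" using p by auto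
  have d: "distinct qs" using p unfolding induced_path_def by simp
  have p1: "induced_path (compl_adj E) (qs @ [v2])"
    by (rule antipath_snoc[OF p(1) ne new(3)]) (use v2 sym in blast)+
  have p2: "induced_path (compl_adj E) (qs @ [v2, v0])"
  proof -
    have "\<not> E v2 v0" "\<And>u. u \<in> set qs \<Longrightarrow> E u v0" using e(4) c03 sym by blast+
    then show ?thesis using antipath_snoc[OF p1, of v0] new dif by simp
  qed
  have p3: "induced_path (compl_adj E) (qs @ [v2, v0, v3])"
  proof -
    have "\<And>u. u \<in> set (qs @ [v2]) \<Longrightarrow> E u v3" using e(3) c03 sym by auto
    then show ?thesis using antipath_snoc[OF p2, of v3] new dif e(5) by (simp add: butlast_append)
  qed
  have "odd (length (qs @ [v2, v0, v3]))"
  proof (rule antipath_closure_odd[OF p3])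
    fix v assume "v \<in> set (qs @ [v2, v0, v3])" "v \<noteq> hd (qs @ [v2, v0, v3])"
      "v \<noteq> last (qs @ [v2, v0, v3])"
    then have "v = v2 \<or> v = v0 \<or> v \<in> set (tl qs)" using ne set_tl_distinct[OF d] by auto
    then show "E v1 v" using e(1,2) v1(2) by blast
  next
    show "3 \<le> length (qs @ [v2, v0, v3])" using p(2) by simp
    show "v1 \<notin> set (qs @ [v2, v0, v3])" "set (v1 # qs @ [v2, v0, v3]) \<subseteq> V" using new dif V by auto
    show "\<not> E v1 (hd (qs @ [v2, v0, v3]))" "\<not> E v1 (last (qs @ [v2, v0, v3]))" using v1(1) e(6) ne by simp_all
  qed
  then show ?thesis by simp
qed

end

section \<open>A minimal counterexample\<close>

context berge_graph
begin

definition edge_attachment :: "'a set \<Rightarrow> 'a list \<Rightarrow> bool" where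
  "edge_attachment Y cs \<longleftrightarrow> (\<exists>x\<in>Y. \<forall>i < length cs. E x (cs ! i) \<longleftrightarrow> (i = 0 \<or> i = length cs - 1))
     \<or> (\<exists>a\<in>Y. \<exists>b\<in>Y. \<not> E a b \<and>
          (\<forall>i < length cs. E a (cs ! i) \<longleftrightarrow> (i = 0 \<or> i = 1 \<or> i = length cs - 1)) \<and>
          (\<forall>i < length cs. E b (cs ! i) \<longleftrightarrow> (i = 0 \<or> i = length cs - 2 \<or> i = length cs - 1)))"

definition edge_attachment_holds :: "'a set \<Rightarrow> bool" where
  "edge_attachment_holds Y \<longleftrightarrow> (\<forall>cs. hole_in (V - Y) E cs \<longrightarrow> length cs > 4 \<longrightarrow>
      complete_to E Y (cs!0) \<longrightarrow> complete_to E Y (cs!(length cs - 1)) \<longrightarrow>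
      (\<forall>i. 0 < i \<and> i < length cs - 1 \<longrightarrow> \<not> complete_to E Y (cs!i)) \<longrightarrow> edge_attachment Y cs)"

definition complete_gaps_even :: "'a set \<Rightarrow> bool" where
  "complete_gaps_even Y \<longleftrightarrow> (\<forall>cs t r. hole_in (V - Y) E cs \<longrightarrow> 0 < t \<longrightarrow> t < r \<longrightarrow> r < length cs \<longrightarrow>
      complete_to E Y (cs!0) \<longrightarrow> complete_to E Y (cs!t) \<longrightarrow> complete_to E Y (cs!r) \<longrightarrow>
      (\<forall>i. 0 < i \<and> i < t \<longrightarrow> \<not> complete_to E Y (cs!i)) \<longrightarrow> t = 1 \<or> even t)"

lemma edge_attachment_mono: "edge_attachment Y' cs \<Longrightarrow> Y' \<subseteq> Y \<Longrightarrow> edge_attachment Y cs"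
  unfolding edge_attachment_def by blast

lemma complete_gaps_evenD:
  assumes "complete_gaps_even Y" "hole_in (V - Y) E cs" "0 < t" "t < r" "r < length cs"
    "complete_to E Y (cs!0)" "complete_to E Y (cs!t)" "complete_to E Y (cs!r)"
    "\<And>i. 0 < i \<Longrightarrow> i < t \<Longrightarrow> \<not> complete_to E Y (cs!i)"
  shows "t = 1 \<or> even t"
  using assms unfolding complete_gaps_even_def by blast

lemma edge_attachment_holdsD:
  assumes "edge_attachment_holds Y" "hole_in (V - Y) E cs" "length cs > 4"
    "complete_to E Y (cs!0)" "complete_to E Y (cs!(length cs - 1))"
    "\<And>i. 0 < i \<Longrightarrow> i < length cs - 1 \<Longrightarrow> \<not> complete_to E Y (cs!i)"
  shows "edge_attachment Y cs"
  using assms unfolding edge_attachment_holds_def by blast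

end

sublocale berge_graph \<subseteq> anti: undirected "compl_adj E"
  by unfold_locales (auto simp: compl_adj_def dest: sym)

text \<open>A counterexample to \<open>complete_gaps_even Y\<close> (third \<open>Y\<close>-complete vertex \<open>cs!r\<close>) or to
  \<open>edge_attachment_holds Y\<close> (\<open>t = length cs - 1\<close>) for an anticonnected \<open>Y\<close> all of whose proper
  anticonnected subsets satisfy both properties.\<close>
locale minimal_counterexample = berge_graph +
  fixes Y :: "'a set" and cs :: "'a list" and t :: nat
  assumes Y_sub: "Y \<subseteq> V" and Y_anticonnected: "anticonnected E Y"
    and IH: "\<And>Y'. Y' \<subset> Y \<Longrightarrow> anticonnected E Y' \<Longrightarrow> complete_gaps_even Y' \<and> edge_attachment_holds Y'"
    and hole: "hole_in (V - Y) E cs"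
    and t_ge_3: "3 \<le> t" and t_odd: "odd t" and t_less: "t < length cs"
    and complete_0: "complete_to E Y (cs!0)" and complete_t: "complete_to E Y (cs!t)"
    and not_complete_inner: "\<And>i. 0 < i \<Longrightarrow> i < t \<Longrightarrow> \<not> complete_to E Y (cs!i)"
    and third_complete_or_last: "(\<exists>r. t < r \<and> r < length cs \<and> complete_to E Y (cs!r)) \<or> t = length cs - 1"
    and last_long: "t = length cs - 1 \<Longrightarrow> 4 < length cs"
    and no_attachment: "\<not> (t = length cs - 1 \<and> edge_attachment Y cs)"
begin

abbreviation complete_but :: "'a \<Rightarrow> 'a \<Rightarrow> bool" where
  "complete_but x v \<equiv> complete_to E (Y - {x}) v"

lemma cs_in_V: "i < length cs \<Longrightarrow> cs!i \<in> V"
  using hole_in_set[OF hole] nth_mem by blast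

lemma cs_notin_Y: "i < length cs \<Longrightarrow> cs!i \<notin> Y"
  using hole_in_set[OF hole] nth_mem by blast

lemma notin_cs: "y \<in> Y \<Longrightarrow> y \<notin> set cs"
  using hole_in_set[OF hole] by blast

lemma in_V: "y \<in> Y \<Longrightarrow> y \<in> V"
  using Y_sub by blast

lemma adj_complete: "complete_to E Y v \<Longrightarrow> y \<in> Y \<Longrightarrow> E y v"
  unfolding complete_to_def using sym by blast

lemma t_ge_5_if_last: "t = length cs - 1 \<Longrightarrow> 5 \<le> t"
proof -
  assume tt: "t = length cs - 1"
  have "even (length cs)" using even_hole[OF hole_in_mono[OF hole]] by blast
  then show "5 \<le> t" using tt last_long t_odd by presburger
qed

lemma path_segment: "a \<le> b \<Longrightarrow> b \<le> t \<Longrightarrow> \<not> (a = 0 \<and> b = length cs - 1) \<Longrightarrow> induced_path E (segment cs a b)"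
  using induced_path_segment[OF hole] t_less by simp

lemma segment_subset: "b \<le> t \<Longrightarrow> set (segment cs a b) \<subseteq> set cs"
  using t_less by (auto simp: set_segment)

lemma exists_far_complete:
  assumes l: "1 \<le> l" "l \<le> r" "r < t" and md: "t \<noteq> length cs - 1 \<or> 2 \<le> l \<or> r + 3 \<le> length cs"
  shows "\<exists>c. c \<in> V \<and> c \<notin> Y \<and> complete_to E Y c \<and> (\<forall>i. l \<le> i \<longrightarrow> i \<le> r \<longrightarrow> \<not> E c (cs!i) \<and> c \<noteq> cs!i)"
proof -
  have far: "\<not> E (cs!k) (cs!i) \<and> cs!k \<noteq> cs!i"
    if "k < length cs" "r + 1 < k \<or> k + 1 < l" "l \<le> i" "i \<le> r" for k i
  proof -
    have i: "i < length cs" "0 < i" "i < length cs - 1" using that l t_less by linarith+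
    have "k \<noteq> i" "k \<noteq> Suc i" "i \<noteq> Suc k" using that(2-4) by linarith+
    then show ?thesis using hole_adj[OF hole that(1) i(1)] hole_nth_eq_iff[OF hole that(1) i(1)] i by auto
  qed
  obtain k where k: "k < length cs" "r + 1 < k \<or> k + 1 < l" "complete_to E Y (cs!k)"
  proof (cases "\<exists>r0. t < r0 \<and> r0 < length cs \<and> complete_to E Y (cs!r0)")
    case True
    then obtain r0 where "t < r0" "r0 < length cs" "complete_to E Y (cs!r0)" by blast
    then show ?thesis using that[of r0] l(3) by simp
  next
    case False
    then have last: "t = length cs - 1" using third_complete_or_last by blast
    show ?thesis
    proof (cases "2 \<le> l")
      case True
      then show ?thesis using that[of 0] complete_0 t_less by fastforce
    next
      case False
      then show ?thesis using that[of "length cs - 1"] complete_t md last t_less by simp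
    qed
  qed
  then show ?thesis using far[OF k(1,2)] cs_in_V cs_notin_Y by blast
qed

lemma gap_between_neighbours_even:
  assumes x: "x \<in> Y" and ab: "Suc a < b" "b \<le> t" and nw: "\<not> (a = 0 \<and> b = length cs - 1)"
    and ea: "E x (cs!a)" and eb: "E x (cs!b)" and mid: "\<And>i. a < i \<Longrightarrow> i < b \<Longrightarrow> \<not> E x (cs!i)"
  shows "even (b - a)"
proof -
  let ?ps = "segment cs a b"
  have ip: "induced_path E ?ps" by (rule path_segment) (use ab nw in auto)
  have "odd (length ?ps)"
  proof (rule path_closure_odd[OF ip])
    show "3 \<le> length ?ps" using ab by simp
    show "x \<notin> set ?ps" using notin_cs[OF x] segment_subset[OF ab(2)] by blast
    show "set (x # ?ps) \<subseteq> V" using in_V[OF x] segment_subset[OF ab(2)] hole_in_set[OF hole] by auto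
    show "E x (hd ?ps)" using ea ab by (simp add: hd_segment)
    show "E x (last ?ps)" using eb ab by (simp add: last_segment)
    fix v assume v: "v \<in> set ?ps" "v \<noteq> hd ?ps" "v \<noteq> last ?ps"
    then obtain k where k: "a \<le> k" "k \<le> b" "v = cs!k" by (auto simp: set_segment)
    have "k \<noteq> a" "k \<noteq> b" using v k ab by (auto simp: hd_segment last_segment)
    then show "\<not> E x v" using mid k by simp
  qed
  then show ?thesis using ab by simp
qed

lemma gap_between_private_neighbours_even:
  assumes u: "u \<in> Y" and w: "w \<in> Y" and uw: "\<not> E u w" and pq: "p < q" "q \<le> t"
    and not_whole: "\<not> (p = 0 \<and> q = length cs - 1)"
    and u_p: "E u (cs!p)" and u_gap: "\<And>i. p < i \<Longrightarrow> i \<le> q \<Longrightarrow> \<not> E u (cs!i)"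
    and w_q: "E w (cs!q)" and w_gap: "\<And>i. p \<le> i \<Longrightarrow> i < q \<Longrightarrow> \<not> E w (cs!i)"
    and c: "c \<in> V" "c \<notin> Y" "complete_to E Y c"
    and c_far: "\<And>i. p \<le> i \<Longrightarrow> i \<le> q \<Longrightarrow> \<not> E c (cs!i) \<and> c \<noteq> cs!i"
  shows "even (q - p)"
proof -
  let ?ps = "segment cs p q"
  have sub: "set ?ps \<subseteq> set cs" by (rule segment_subset[OF pq(2)])
  have "odd (length ?ps)"
  proof (rule path_closure_through_apex_odd[OF path_segment])
    show "p \<le> q" "q \<le> t" "\<not> (p = 0 \<and> q = length cs - 1)" "?ps \<noteq> []"
      using pq not_whole by (auto simp: segment_def)
    show "set ?ps \<subseteq> V" "u \<in> V" "w \<in> V" "c \<in> V" using sub hole_in_set[OF hole] in_V u w c by auto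
    show "u \<notin> set ?ps" "w \<notin> set ?ps" "u \<noteq> c" "w \<noteq> c" using notin_cs u w sub c by auto
    show "u \<noteq> w" using u_gap[of q] w_q pq by auto
    show "E c u" "E c w" using complete_toD[OF c(3)] u w by auto
    show "c \<notin> set ?ps" "\<And>v. v \<in> set ?ps \<Longrightarrow> \<not> E c v" using c_far by (fastforce simp: set_segment)+
    show "E u (hd ?ps)" "E w (last ?ps)" using u_p w_q pq by (simp_all add: hd_segment last_segment)
    show "\<And>v. v \<in> set ?ps \<Longrightarrow> v \<noteq> hd ?ps \<Longrightarrow> \<not> E u v"
      using u_gap pq by (auto simp: set_segment hd_segment le_less)
    show "\<And>v. v \<in> set (butlast ?ps) \<Longrightarrow> \<not> E w v"
      using w_gap pq by (auto simp: set_butlast_segment)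
  qed (fact uw)
  then show ?thesis using pq by simp
qed

lemma has_inner_neighbour: assumes y: "y \<in> Y" shows "\<exists>i. 0 < i \<and> i < t \<and> E y (cs!i)"
proof (rule ccontr)
  assume no: "\<not> (\<exists>i. 0 < i \<and> i < t \<and> E y (cs!i))"
  show False
  proof (cases "t = length cs - 1")
    case True
    have "edge_attachment Y cs" unfolding edge_attachment_def
    proof (rule disjI1, rule bexI[OF _ y], intro allI impI)
      fix i assume i: "i < length cs"
      show "E y (cs ! i) = (i = 0 \<or> i = length cs - 1)"
      proof (cases "i = 0 \<or> i = length cs - 1")
        case True then show ?thesis using adj_complete[OF complete_0 y] adj_complete[OF complete_t y] \<open>t = length cs - 1\<close> by auto
      next
        case False
        then have "0 < i" "i < t" using i \<open>t = length cs - 1\<close> by auto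
        then show ?thesis using no False by auto
      qed
    qed
    then show False using no_attachment True by simp
  next
    case False
    have "even (t - 0)"
      by (rule gap_between_neighbours_even[OF y]) (use t_ge_3 False adj_complete[OF complete_0 y] adj_complete[OF complete_t y] no in auto)
    then show False using t_odd by simp
  qed
qed

lemma exists_two: "\<exists>a b. a \<in> Y \<and> b \<in> Y \<and> a \<noteq> b"
proof -
  obtain y where y: "y \<in> Y" using Y_anticonnected unfolding anticonnected_def by blast
  obtain i where i: "0 < i" "i < t" "E y (cs!i)" using has_inner_neighbour[OF y] by blast
  have "\<not> complete_to E Y (cs!i)" using not_complete_inner i by simp
  then obtain b where b: "b \<in> Y" "\<not> E (cs!i) b" unfolding complete_to_def by blast
  have "b \<noteq> y" using b i sym by blast
  then show ?thesis using b y by blast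
qed

lemma exists_nonneighbour: assumes x: "x \<in> Y" shows "\<exists>y\<in>Y. y \<noteq> x \<and> \<not> E x y"
proof -
  obtain a b where ab: "a \<in> Y" "b \<in> Y" "a \<noteq> b" using exists_two by blast
  obtain z where z: "z \<in> Y" "z \<noteq> x" using ab by blast
  have "(restrict_rel (compl_adj E) Y)\<^sup>*\<^sup>* x z" using Y_anticonnected x z unfolding anticonnected_iff_connected_on connected_on_def by blast
  then show ?thesis
  proof (cases rule: converse_rtranclpE)
    case base then show ?thesis using z by simp
  next
    case (step c)
    then have "c \<in> Y" "c \<noteq> x" "\<not> E x c" unfolding restrict_rel_def compl_adj_def by auto
    then show ?thesis by blast
  qed
qed

lemma not_complete_minus_self: "x \<in> Y \<Longrightarrow> \<not> complete_to E (Y - {x}) x"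
  using exists_nonneighbour unfolding complete_to_def using sym by blast

text \<open>Rerooting the hole at \<open>cs!c\<close> turns the gap between \<open>c\<close> and \<open>c'\<close> into an initial
  gap for \<open>complete_gaps_even Y'\<close>, the third vertex being \<open>cs!r\<close>.\<close>
lemma complete_gap_even_by_rotation:
  assumes Y': "Y' \<subseteq> Y" "complete_gaps_even Y'"
    and c: "c < c'" "c' < length cs" "complete_to E Y' (cs!c)" "complete_to E Y' (cs!c')"
    and gap: "\<And>i. c < i \<Longrightarrow> i < c' \<Longrightarrow> \<not> complete_to E Y' (cs!i)"
    and r: "r < length cs" "r < c \<or> c' < r" "complete_to E Y' (cs!r)"
  shows "c' = Suc c \<or> even (c' - c)"
proof -
  let ?n = "length cs"
  have hole': "hole_in (V - Y') E (rotate c cs)"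
    by (rule hole_in_rotate[OF hole_in_mono[OF hole]]) (use Y' in auto)
  have rot: "rotate c cs ! i = cs ! ((c + i) mod ?n)" if "i < ?n" for i
    using that by (simp add: nth_rotate)
  have rot_small: "rotate c cs ! i = cs ! (c + i)" if "c + i < ?n" for i
    using rot[of i] that by simp
  define r' where "r' = (if c' < r then r - c else r + ?n - c)"
  have r': "c' - c < r'" "r' < ?n" "(c + r') mod ?n = r" using r c unfolding r'_def by auto
  have "c' - c = 1 \<or> even (c' - c)"
  proof (rule complete_gaps_evenD[OF Y'(2) hole'])
    show "0 < c' - c" "c' - c < r'" "r' < length (rotate c cs)" using c r' by auto
    show "complete_to E Y' (rotate c cs ! 0)" "complete_to E Y' (rotate c cs ! (c' - c))"
      "complete_to E Y' (rotate c cs ! r')"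
      using rot_small[of 0] rot_small[of "c' - c"] rot[OF r'(2)] r'(3) c r by auto
    fix i assume "0 < i" "i < c' - c"
    then show "\<not> complete_to E Y' (rotate c cs ! i)" using rot_small[of i] gap[of "c + i"] c by auto
  qed
  then show ?thesis using c by auto
qed

lemma even_gaps_complete_positions:
  assumes sub: "Y' \<subset> Y" and ac: "anticonnected E Y'"
    and ext: "(\<exists>r. t < r \<and> r < length cs \<and> complete_to E Y (cs!r)) \<or> (\<exists>i. 0 < i \<and> i < t \<and> complete_to E Y' (cs!i))"
  shows "even_gaps {i. i \<le> t \<and> complete_to E Y' (cs!i)} t"
  unfolding even_gaps_def
proof (intro ballI impI)
  let ?K = "{i. i \<le> t \<and> complete_to E Y' (cs!i)}"
  fix c c' assume c: "c \<in> ?K" "c' \<in> ?K" "c < c'" "c' \<le> t" and gap: "\<forall>i. c < i \<longrightarrow> i < c' \<longrightarrow> i \<notin> ?K"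
  have Y': "Y' \<subseteq> Y" "complete_gaps_even Y'" using sub IH[OF sub ac] by auto
  obtain r where r: "r < length cs" "r < c \<or> c' < r" "complete_to E Y' (cs!r)"
  proof (cases "\<exists>r. t < r \<and> r < length cs \<and> complete_to E Y (cs!r)")
    case True
    then show ?thesis using that c(4) complete_to_mono[OF _ Y'(1)] by fastforce
  next
    case False
    then obtain i where i: "0 < i" "i < t" "complete_to E Y' (cs!i)" using ext by blast
    have "0 < c \<or> c' < t"
    proof (rule ccontr)
      assume "\<not> (0 < c \<or> c' < t)"
      then have "c = 0" "c' = t" using c(4) by auto
      then show False using gap i by auto
    qed
    then show ?thesis
    proof
      assume "0 < c"
      moreover have "cs \<noteq> []" using t_less by auto
      ultimately show ?thesis using that[of 0] complete_to_mono[OF complete_0 Y'(1)] by simp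
    next
      assume "c' < t"
      then show ?thesis using that[of t] complete_to_mono[OF complete_t Y'(1)] t_less by simp
    qed
  qed
  show "c' = Suc c \<or> even (c' - c)"
    by (rule complete_gap_even_by_rotation[OF Y' c(3) _ _ _ _ r]) (use c gap t_less in auto)
qed

lemma exists_inner_complete_minus:
  assumes x: "x \<in> Y" and acx: "anticonnected E (Y - {x})"
  shows "\<exists>i. 0 < i \<and> i < t \<and> complete_but x (cs!i)"
proof (rule ccontr)
  assume "\<not> ?thesis"
  then have nz: "\<And>i. 0 < i \<Longrightarrow> i < t \<Longrightarrow> \<not> complete_but x (cs!i)" by blast
  have sub: "Y - {x} \<subset> Y" using x by auto
  have cmono: "\<And>v. complete_to E Y v \<Longrightarrow> complete_to E (Y - {x}) v" unfolding complete_to_def by blast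
  have h': "hole_in (V - (Y - {x})) E cs" by (rule hole_in_mono[OF hole]) auto
  have AB: "complete_gaps_even (Y - {x}) \<and> edge_attachment_holds (Y - {x})" by (rule IH[OF sub acx])
  show False
  proof (cases "\<exists>r. t < r \<and> r < length cs \<and> complete_to E Y (cs!r)")
    case True
    then obtain r where r: "t < r" "r < length cs" "complete_to E Y (cs!r)" by blast
    have "t = 1 \<or> even t"
      by (rule complete_gaps_evenD[of "Y - {x}" cs t r]) (use AB h' t_ge_3 r cmono[OF complete_0] cmono[OF complete_t] cmono[OF r(3)] nz in auto)
    then show False using t_odd t_ge_3 by auto
  next
    case False
    then have tt: "t = length cs - 1" using third_complete_or_last by blast
    have "edge_attachment (Y - {x}) cs"
      by (rule edge_attachment_holdsD) (use AB h' last_long[OF tt] cmono[OF complete_0] cmono[OF complete_t] nz tt in auto)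
    then have "edge_attachment Y cs" by (rule edge_attachment_mono) auto
    then show False using no_attachment tt by simp
  qed
qed

lemma complete_but_neighbour_at_ends:
  assumes "k \<le> t" "complete_but x (cs!k)" "E x (cs!k)"
  shows "k = 0 \<or> k = t"
proof (rule ccontr)
  assume "\<not> (k = 0 \<or> k = t)"
  moreover have "complete_to E Y (cs!k)" using assms sym unfolding complete_to_def by blast
  ultimately show False using not_complete_inner assms(1) by simp
qed

context
  fixes x assumes x: "x \<in> Y" and x_noncut: "anticonnected E (Y - {x})"
begin

abbreviation K :: "nat set" where
  "K \<equiv> {i. i \<le> t \<and> complete_but x (cs!i)}"

lemma IH_minus_x: "complete_gaps_even (Y - {x}) \<and> edge_attachment_holds (Y - {x})"
  using IH[of "Y - {x}"] x x_noncut by blast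

lemma even_gaps_K: "even_gaps K t"
  by (rule even_gaps_complete_positions) (use x x_noncut exists_inner_complete_minus[OF x x_noncut] in auto)

context
  fixes a b
  assumes ab: "Suc a < b" "b \<le> t" and not_whole: "\<not> (a = 0 \<and> b = length cs - 1)"
    and x_a: "E x (cs!a)" and x_b: "E x (cs!b)" and x_gap: "\<And>i. a < i \<Longrightarrow> i < b \<Longrightarrow> \<not> E x (cs!i)"
begin

lemma x_gap_even: "even (b - a)"
  by (rule gap_between_neighbours_even[OF x ab not_whole x_a x_b x_gap])

lemma hole_through_x: "hole_in (V - (Y - {x})) E (x # segment cs a b)"
proof (rule hole_in_Cons[OF sym path_segment])
  show "a \<le> b" "b \<le> t" "\<not> (a = 0 \<and> b = length cs - 1)" using ab not_whole by auto
  show "3 \<le> length (segment cs a b)" using ab by simp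
  have sub: "set (segment cs a b) \<subseteq> set cs" by (rule segment_subset[OF ab(2)])
  show "x \<notin> set (segment cs a b)" using notin_cs[OF x] sub by blast
  show "\<not> E x x" by (rule irrefl)
  show "E x (hd (segment cs a b))" "E x (last (segment cs a b))"
    using x_a x_b ab by (auto simp: hd_segment last_segment)
  show "\<not> E x v" if "v \<in> set (segment cs a b)" "v \<noteq> hd (segment cs a b)" "v \<noteq> last (segment cs a b)" for v
  proof -
    have "v \<in> (\<lambda>k. cs ! k) ` {a..b}" using that(1) unfolding set_segment .
    then obtain k where k: "a \<le> k" "k \<le> b" "v = cs!k" by auto
    have "k \<noteq> a" "k \<noteq> b" using that k ab by (auto simp: hd_segment last_segment)
    then show ?thesis using x_gap k by simp
  qed
  show "set (x # segment cs a b) \<subseteq> V - (Y - {x})" using sub hole_in_set[OF hole] in_V[OF x] by auto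
qed

text \<open>Rooted at \<open>cs!k\<close>, the hole through \<open>x\<close> runs from \<open>cs!k\<close> up to \<open>cs!b\<close>, then through
  \<open>x\<close>, then from \<open>cs!a\<close> up to \<open>cs!(k - 1)\<close>.\<close>
definition rerooted :: "nat \<Rightarrow> 'a list" where
  "rerooted k = rotate (Suc (k - a)) (x # segment cs a b)"

lemma length_rerooted: "length (rerooted k) = b - a + 2"
  using ab by (simp add: rerooted_def)

lemma hole_rerooted: "hole_in (V - (Y - {x})) E (rerooted k)"
  unfolding rerooted_def by (rule hole_in_rotate[OF hole_through_x])

lemma nth_rerooted_mod:
  assumes "i < b - a + 2"
  shows "rerooted k ! i = (x # segment cs a b) ! ((Suc (k - a) + i) mod (b - a + 2))"
proof -
  have len: "length (x # segment cs a b) = b - a + 2" using ab by simp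
  have "rerooted k ! i = (x # segment cs a b) ! ((Suc (k - a) + i) mod length (x # segment cs a b))"
    unfolding rerooted_def by (rule nth_rotate) (use assms len in simp)
  then show ?thesis unfolding len .
qed

lemma nth_rerooted_before: "a \<le> k \<Longrightarrow> k + i \<le> b \<Longrightarrow> rerooted k ! i = cs ! (k + i)"
  using nth_rerooted_mod[of i k] by (simp add: nth_segment)

lemma nth_rerooted_x: "a \<le> k \<Longrightarrow> k \<le> b \<Longrightarrow> rerooted k ! Suc (b - k) = x"
  using nth_rerooted_mod[of "Suc (b - k)" k] ab by simp

lemma nth_rerooted_after:
  assumes "a \<le> j" "j < k" "k \<le> b" "i + k = b - a + 2 + j"
  shows "rerooted k ! i = cs ! j"
proof -
  have "Suc (k - a) + i = (b - a + 2) + Suc (j - a)" "Suc (j - a) < b - a + 2" using assms by linarith+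
  then have "(Suc (k - a) + i) mod (b - a + 2) = Suc (j - a)" by (simp only: mod_add_self1 mod_less)
  then show ?thesis using nth_rerooted_mod[of i k] assms by (simp add: nth_segment)
qed

lemma rerooted_cases:
  assumes "a \<le> k" "k \<le> b" "i < b - a + 2"
  obtains "k + i \<le> b" "rerooted k ! i = cs ! (k + i)"
    | "i = Suc (b - k)" "rerooted k ! i = x"
    | j where "a \<le> j" "j < k" "i + k = b - a + 2 + j" "rerooted k ! i = cs ! j"
proof -
  consider "k + i \<le> b" | "i = Suc (b - k)" | "Suc (b - k) < i" using assms by linarith
  then show thesis
  proof cases
    case 3
    define j where "j = i + k - (b - a + 2)"
    have j: "a \<le> j" "j < k" "i + k = b - a + 2 + j" using 3 assms unfolding j_def by linarith+
    then show thesis using that(3) nth_rerooted_after[OF j(1,2) assms(2) j(3)] by blast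
  qed (use that nth_rerooted_before nth_rerooted_x assms in auto)
qed

text \<open>Three \<open>(Y - {x})\<close>-complete vertices in the gap: rerooting at the last one, the
  first one is reached after the even detour through \<open>x\<close>.\<close>
lemma gap_complete_ends_even:
  assumes lo: "a \<le> lo" "lo < mi" "mi < hi" "hi \<le> b"
    and complete: "complete_but x (cs!lo)" "complete_but x (cs!mi)" "complete_but x (cs!hi)"
    and between: "\<And>k. a \<le> k \<Longrightarrow> k \<le> b \<Longrightarrow> complete_but x (cs!k) \<Longrightarrow> lo \<le> k \<and> k \<le> hi"
  shows "even (hi - lo)"
proof -
  define t' where "t' = b - hi + 2 + (lo - a)"
  define r' where "r' = b - hi + 2 + (mi - a)"
  have hi': "a \<le> hi" using lo by simp
  have pos: "0 < t'" "t' < r'" "r' < length (rerooted hi)"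
    using lo ab unfolding t'_def r'_def length_rerooted by auto
  have at: "rerooted hi ! 0 = cs ! hi" "rerooted hi ! t' = cs ! lo" "rerooted hi ! r' = cs ! mi"
    using nth_rerooted_before[OF hi', of 0] nth_rerooted_after[of lo hi t'] nth_rerooted_after[of mi hi r'] lo
    unfolding t'_def r'_def by simp_all
  have inner: "\<not> complete_but x (rerooted hi ! i)" if i: "0 < i" "i < t'" for i
  proof -
    have "i < b - a + 2" using i lo unfolding t'_def by linarith
    then consider "hi + i \<le> b" "rerooted hi ! i = cs ! (hi + i)" | "i = Suc (b - hi)" "rerooted hi ! i = x"
      | j where "a \<le> j" "j < hi" "i + hi = b - a + 2 + j" "rerooted hi ! i = cs ! j"
      by (rule rerooted_cases[OF hi' lo(4)])
    then show ?thesis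
    proof cases
      case 1 then show ?thesis using between[of "hi + i"] i lo by auto
    next
      case 2 then show ?thesis using not_complete_minus_self[OF x] by simp
    next
      case (3 j)
      then have "j < lo" using i lo unfolding t'_def by linarith
      then show ?thesis using 3 between[of j] lo by auto
    qed
  qed
  have "t' = 1 \<or> even t'"
    by (rule complete_gaps_evenD[OF _ hole_rerooted pos]) (use IH_minus_x at complete inner in auto)
  then have "even t'" unfolding t'_def by auto
  then show ?thesis using x_gap_even lo unfolding t'_def by presburger
qed

context
  fixes c assumes c: "a < c" "Suc c < b"
    and pair: "complete_but x (cs!c)" "complete_but x (cs!Suc c)"
    and only_pair: "\<And>k. a \<le> k \<Longrightarrow> k \<le> b \<Longrightarrow> complete_but x (cs!k) \<Longrightarrow> k = c \<or> k = Suc c"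
begin

abbreviation "C \<equiv> rerooted (Suc c)"

lemma length_C: "length C = b - a + 2"
  by (rule length_rerooted)

lemma C_at: "C ! 0 = cs ! Suc c" "C ! 1 = cs ! (c + 2)" "C ! (length C - 1) = cs ! c"
  "C ! (length C - 2) = cs ! (c - 1)" "C ! (b - c) = x"
proof -
  have c': "a \<le> Suc c" "Suc c \<le> b" using c by auto
  show "C ! 0 = cs ! Suc c" "C ! 1 = cs ! (c + 2)"
    using nth_rerooted_before[OF c'(1), of 0] nth_rerooted_before[OF c'(1), of 1] c by simp_all
  show "C ! (b - c) = x" using nth_rerooted_x[OF c'] c by (simp add: Suc_diff_Suc)
  show "C ! (length C - 1) = cs ! c" "C ! (length C - 2) = cs ! (c - 1)"
    using nth_rerooted_after[of c "Suc c" "b - a + 1"] nth_rerooted_after[of "c - 1" "Suc c" "b - a"] c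
    unfolding length_C by simp_all
qed

lemma gap_inside: "1 \<le> a" "b < t"
proof -
  show "1 \<le> a"
    using only_pair[of 0] complete_to_mono[OF complete_0, of "Y - {x}"] c by (cases a) auto
  show "b < t"
    using only_pair[of t] complete_to_mono[OF complete_t, of "Y - {x}"] c ab by (cases "b = t") auto
qed

lemma C_attachment: "edge_attachment (Y - {x}) C"
proof (rule edge_attachment_holdsD[OF _ hole_rerooted])
  show "edge_attachment_holds (Y - {x})" using IH_minus_x by simp
  show "4 < length C" using c unfolding length_C by simp
  show "complete_but x (C ! 0)" "complete_but x (C ! (length C - 1))" using C_at pair by simp_all
  show "\<not> complete_but x (C ! i)" if i: "0 < i" "i < length C - 1" for i
  proof -
    have c': "a \<le> Suc c" "Suc c \<le> b" using c by auto
    have "i < b - a + 2" using i unfolding length_C by simp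
    then consider "Suc c + i \<le> b" "C ! i = cs ! (Suc c + i)" | "i = Suc (b - Suc c)" "C ! i = x"
      | j where "a \<le> j" "j < Suc c" "i + Suc c = b - a + 2 + j" "C ! i = cs ! j"
      by (rule rerooted_cases[OF c'])
    then show ?thesis
    proof cases
      case 1 then show ?thesis using only_pair[of "Suc c + i"] i c by auto
    next
      case 2 then show ?thesis using not_complete_minus_self[OF x] by simp
    next
      case (3 j)
      then have "j < c" using i unfolding length_C by linarith
      then show ?thesis using 3 only_pair[of j] c by auto
    qed
  qed
qed

lemma C_pattern_nonadj:
  assumes pattern: "\<forall>i<length C. E w (C ! i) \<longleftrightarrow> P i" and J: "J \<subseteq> {a..b}"
    and avoid: "\<And>i. i < length C \<Longrightarrow> P i \<Longrightarrow> C ! i \<in> (!) cs ` J"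
  shows "\<not> E w x" "\<And>k. a \<le> k \<Longrightarrow> k \<le> b \<Longrightarrow> k \<notin> J \<Longrightarrow> \<not> E w (cs ! k)"
proof -
  have d: "distinct C" using hole_rerooted[unfolded hole_in_def] by simp
  have bl: "b < length cs" using ab t_less by simp
  show "\<not> E w x"
  proof (rule not_adj_outside_pattern[where L = C and R = E and w = w and P = P, OF d pattern])
    show "C ! i \<noteq> x" if "i < length C" "P i" for i
      using avoid[OF that] J notin_cs[OF x] bl by (auto simp: nth_mem)
  qed (simp add: rerooted_def)
  fix k assume k: "a \<le> k" "k \<le> b" "k \<notin> J"
  show "\<not> E w (cs ! k)"
  proof (rule not_adj_outside_pattern[where L = C and R = E and w = w and P = P, OF d pattern])
    show "cs ! k \<in> set C" using in_set_segment[OF k(1,2), of cs] by (simp add: rerooted_def)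
    show "C ! i \<noteq> cs ! k" if i: "i < length C" "P i" for i
    proof -
      obtain j where j: "j \<in> J" "C ! i = cs ! j" using avoid[OF i] by blast
      then have "j < length cs" "j \<noteq> k" using J k bl by auto
      then show ?thesis using j(2) hole_nth_eq_iff[OF hole, of j k] k bl by simp
    qed
  qed
qed

lemma far_complete_left:
  "\<exists>c1. c1 \<in> V \<and> c1 \<notin> Y \<and> complete_to E Y c1 \<and> (\<forall>i. a \<le> i \<longrightarrow> i \<le> c \<longrightarrow> \<not> E c1 (cs!i) \<and> c1 \<noteq> cs!i)"
  using exists_far_complete[of a c] gap_inside c ab t_less by auto

lemma far_complete_right:
  "\<exists>c2. c2 \<in> V \<and> c2 \<notin> Y \<and> complete_to E Y c2 \<and> (\<forall>i. Suc c \<le> i \<longrightarrow> i \<le> b \<longrightarrow> \<not> E c2 (cs!i) \<and> c2 \<noteq> cs!i)"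
  using exists_far_complete[of "Suc c" b] gap_inside c ab by auto

text \<open>An attachment of \<open>C\<close> by one vertex \<open>w\<close> splits the gap into two even parts on either
  side of the pair, so \<open>b - a\<close> would be odd.\<close>
lemma one_vertex_attachment_absurd:
  assumes w: "w \<in> Y - {x}" and pattern: "\<forall>i<length C. E w (C ! i) \<longleftrightarrow> (i = 0 \<or> i = length C - 1)"
  shows False
proof -
  have wY: "w \<in> Y" using w by simp
  have w_pair: "E w (cs ! c)" "E w (cs ! Suc c)" using pattern C_at length_C by auto
  note nonadj = C_pattern_nonadj[OF pattern]
  have wx: "\<not> E x w"
    using nonadj(1)[of "{c, Suc c}"] C_at length_C c sym by fastforce
  have w_far: "\<not> E w (cs ! k)" if "a \<le> k" "k \<le> b" "k \<noteq> c" "k \<noteq> Suc c" for k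
    by (rule nonadj(2)[of "{c, Suc c}"]) (use that c C_at length_C in auto)
  obtain c1 c2 where far: "c1 \<in> V" "c1 \<notin> Y" "complete_to E Y c1"
    "\<And>i. a \<le> i \<Longrightarrow> i \<le> c \<Longrightarrow> \<not> E c1 (cs!i) \<and> c1 \<noteq> cs!i"
    "c2 \<in> V" "c2 \<notin> Y" "complete_to E Y c2"
    "\<And>i. Suc c \<le> i \<Longrightarrow> i \<le> b \<Longrightarrow> \<not> E c2 (cs!i) \<and> c2 \<noteq> cs!i"
    using far_complete_left far_complete_right by blast
  have "even (c - a)"
    by (rule gap_between_private_neighbours_even[OF x wY wx _ _ _ x_a _ w_pair(1) _ far(1-4)])
      (use c ab gap_inside x_gap w_far in auto)
  moreover have "even (b - Suc c)"
    by (rule gap_between_private_neighbours_even[OF wY x _ _ _ _ w_pair(2) _ x_b _ far(5-8)])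
      (use c ab wx sym x_gap w_far in auto)
  ultimately show False using x_gap_even c by presburger
qed

text \<open>An attachment of \<open>C\<close> by two vertices splits the gap into two even parts and the
  three edges between \<open>cs!(c - 1)\<close> and \<open>cs!(c + 2)\<close>, so \<open>b - a\<close> would be odd.\<close>
lemma two_vertex_attachment_absurd:
  assumes u: "u \<in> Y - {x}" and v: "v \<in> Y - {x}"
    and pu: "\<forall>i<length C. E u (C ! i) \<longleftrightarrow> (i = 0 \<or> i = 1 \<or> i = length C - 1)"
    and pv: "\<forall>i<length C. E v (C ! i) \<longleftrightarrow> (i = 0 \<or> i = length C - 2 \<or> i = length C - 1)"
  shows False
proof -
  have uY: "u \<in> Y" and vY: "v \<in> Y" using u v by auto
  have N: "4 < length C" using c unfolding length_C by simp
  have u_adj: "E u (cs ! (c + 2))" using pu[rule_format, of 1] N C_at(2) by simp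
  have v_adj: "E v (cs ! (c - 1))" using pv[rule_format, of "length C - 2"] N C_at(4) by simp
  have J: "{Suc c, c + 2, c} \<subseteq> {a..b}" "{Suc c, c - 1, c} \<subseteq> {a..b}" using c by auto
  have avoid_u: "C ! i \<in> (!) cs ` {Suc c, c + 2, c}" if "i < length C" "i = 0 \<or> i = 1 \<or> i = length C - 1" for i
    using that C_at by auto
  have avoid_v: "C ! i \<in> (!) cs ` {Suc c, c - 1, c}" if "i < length C" "i = 0 \<or> i = length C - 2 \<or> i = length C - 1" for i
    using that C_at by auto
  note u_nonadj = C_pattern_nonadj[OF pu J(1) avoid_u] and v_nonadj = C_pattern_nonadj[OF pv J(2) avoid_v]
  have v_left: "\<not> E v (cs ! i)" if "a \<le> i" "i < c - 1" for i
  proof (rule v_nonadj(2))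
    show "i \<notin> {Suc c, c - 1, c}" "a \<le> i" "i \<le> b" using that c by auto
  qed
  have u_right: "\<not> E u (cs ! i)" if "c + 2 < i" "i \<le> b" for i
  proof (rule u_nonadj(2))
    show "i \<notin> {Suc c, c + 2, c}" "a \<le> i" "i \<le> b" using that c by auto
  qed
  obtain c1 c2 where far: "c1 \<in> V" "c1 \<notin> Y" "complete_to E Y c1"
    "\<And>i. a \<le> i \<Longrightarrow> i \<le> c \<Longrightarrow> \<not> E c1 (cs!i) \<and> c1 \<noteq> cs!i"
    "c2 \<in> V" "c2 \<notin> Y" "complete_to E Y c2"
    "\<And>i. Suc c \<le> i \<Longrightarrow> i \<le> b \<Longrightarrow> \<not> E c2 (cs!i) \<and> c2 \<noteq> cs!i"
    using far_complete_left far_complete_right by blast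
  have "even (c - 1 - a)"
  proof (cases "c - 1 = a")
    case False
    have xv: "\<not> E x v" using v_nonadj(1) sym by blast
    show ?thesis
      by (rule gap_between_private_neighbours_even[OF x vY xv _ _ _ x_a _ v_adj _ far(1-3)])
        (use False c ab gap_inside x_gap v_left far(4) in auto)
  qed simp
  moreover have "even (b - (c + 2))"
  proof (cases "c + 2 = b")
    case False
    show ?thesis
      by (rule gap_between_private_neighbours_even[OF uY x u_nonadj(1) _ _ _ u_adj _ x_b _ far(5-7)])
        (use False c ab x_gap u_right far(8) in auto)
  qed simp
  ultimately show False using x_gap_even c by presburger
qed

lemma gap_complete_pair_absurd: False
  using C_attachment unfolding edge_attachment_def
proof (elim disjE bexE conjE)
  fix w assume "w \<in> Y - {x}" "\<forall>i<length C. E w (C ! i) \<longleftrightarrow> (i = 0 \<or> i = length C - 1)"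
  then show False by (rule one_vertex_attachment_absurd)
next
  fix u v assume "u \<in> Y - {x}" "v \<in> Y - {x}"
    "\<forall>i<length C. E u (C ! i) \<longleftrightarrow> (i = 0 \<or> i = 1 \<or> i = length C - 1)"
    "\<forall>i<length C. E v (C ! i) \<longleftrightarrow> (i = 0 \<or> i = length C - 2 \<or> i = length C - 1)"
  then show False by (rule two_vertex_attachment_absurd)
qed

end

lemma complete_pair_in_gap:
  assumes c: "a \<le> c" "Suc c \<le> b" and pair: "complete_but x (cs!c)" "complete_but x (cs!Suc c)"
    and only_pair: "\<And>k. a \<le> k \<Longrightarrow> k \<le> b \<Longrightarrow> complete_but x (cs!k) \<Longrightarrow> k = c \<or> k = Suc c"
  shows "complete_but x (cs!1) \<or> complete_but x (cs!(t-1))"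
proof -
  consider "c = a" | "Suc c = b" | "a < c" "Suc c < b" using c by linarith
  then show ?thesis
  proof cases
    case 1
    then have "a = 0" using complete_but_neighbour_at_ends[of a] pair(1) x_a ab by auto
    then show ?thesis using 1 pair(2) by simp
  next
    case 2
    then have "c = t - 1" using complete_but_neighbour_at_ends[of b] pair(2) x_b ab by auto
    then show ?thesis using pair(1) by simp
  next
    case 3
    then show ?thesis using gap_complete_pair_absurd[OF 3 pair only_pair] by blast
  qed
qed

text \<open>Within the gap, the \<open>(Y - {x})\<close>-complete positions lie between the outermost ones
  \<open>lo\<close> and \<open>hi\<close>; either there is a third one in between, or they form an adjacent pair.\<close>
lemma consec_pairs_even_in_gap:
  assumes not_second: "\<not> complete_but x (cs!1)" and not_penult: "\<not> complete_but x (cs!(t-1))"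
  shows "even (consec_pairs K a b)"
proof (rule ccontr)
  assume odd: "odd (consec_pairs K a b)"
  then obtain i0 where i0: "a \<le> i0" "i0 < b" "i0 \<in> K" "Suc i0 \<in> K"
    unfolding consec_pairs_def by (metis (mono_tags, lifting) card.empty empty_Collect_eq odd_card_imp_not_empty)
  define M where "M = K \<inter> {a..b}"
  have M: "finite M" "M \<noteq> {}" using i0 unfolding M_def by auto
  define lo where "lo = Min M"
  define hi where "hi = Max M"
  have lo: "lo \<in> K" "a \<le> lo" "\<And>k. k \<in> K \<Longrightarrow> a \<le> k \<Longrightarrow> k \<le> b \<Longrightarrow> lo \<le> k"
    using Min_in[OF M] Min_le[OF M(1)] unfolding lo_def M_def by auto
  have hi: "hi \<in> K" "hi \<le> b" "\<And>k. k \<in> K \<Longrightarrow> a \<le> k \<Longrightarrow> k \<le> b \<Longrightarrow> k \<le> hi"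
    using Max_in[OF M] Max_ge[OF M(1)] unfolding hi_def M_def by auto
  have lo_hi: "lo < hi" using lo(3)[of i0] hi(3)[of "Suc i0"] i0 by auto
  have same: "consec_pairs K a b = consec_pairs K lo hi"
    by (rule consec_pairs_restrict) (use lo hi lo_hi in auto)
  show False
  proof (cases "\<exists>mi\<in>K. lo < mi \<and> mi < hi")
    case True
    then obtain mi where "mi \<in> K" "lo < mi" "mi < hi" by blast
    then have "even (hi - lo)"
      by (intro gap_complete_ends_even) (use lo hi ab in \<open>auto intro: le_trans\<close>)
    then show False
      using even_gaps_parity[OF even_gaps_K lo(1) hi(1)] lo_hi hi ab same odd by simp
  next
    case False
    then have "consec_pairs K lo hi = (if hi = Suc lo then 1 else 0)"
      by (intro consec_pairs_gap) (use lo hi lo_hi in auto)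
    then have "hi = Suc lo" using odd same by (auto split: if_splits)
    moreover have "k = lo \<or> k = Suc lo" if "a \<le> k" "k \<le> b" "complete_but x (cs!k)" for k
      using lo(3)[of k] hi(3)[of k] that ab \<open>hi = Suc lo\<close> by auto
    ultimately have "complete_but x (cs!1) \<or> complete_but x (cs!(t-1))"
      using complete_pair_in_gap[of lo] lo hi by auto
    then show False using not_second not_penult by blast
  qed
qed

end

lemma consec_pairs_even_between_neighbours:
  assumes not_second: "\<not> complete_but x (cs!1)" and not_penult: "\<not> complete_but x (cs!(t-1))"
    and ab: "a < b" "b \<le> t" and x_a: "E x (cs!a)" and x_b: "E x (cs!b)"
    and x_gap: "\<And>i. a < i \<Longrightarrow> i < b \<Longrightarrow> \<not> E x (cs!i)"
  shows "even (consec_pairs K a b)"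
proof (cases "b = Suc a")
  case True
  have "\<not> (a \<in> K \<and> Suc a \<in> K)"
    using complete_but_neighbour_at_ends[of a] complete_but_neighbour_at_ends[of b] x_a x_b True ab t_ge_3
    by auto
  then have "consec_pairs K a b = 0"
  proof (cases "a \<in> K")
    case a: True
    then have "Suc a \<notin> K" using \<open>\<not> (a \<in> K \<and> Suc a \<in> K)\<close> by blast
    then show ?thesis by (intro consec_pairs_single[of K a b a]) (use a True in \<open>auto simp: le_Suc_eq\<close>)
  next
    case False
    then show ?thesis by (intro consec_pairs_single[of K a b "Suc a"]) (use True in \<open>auto simp: le_Suc_eq\<close>)
  qed
  then show ?thesis by simp
next
  case False
  have "\<not> (a = 0 \<and> b = length cs - 1)"
  proof
    assume "a = 0 \<and> b = length cs - 1"
    moreover obtain i where "0 < i" "i < t" "E x (cs!i)" using has_inner_neighbour[OF x] by blast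
    ultimately show False using x_gap ab t_less by auto
  qed
  then show ?thesis using consec_pairs_even_in_gap[of a b] False assms by simp
qed

text \<open>Summing over the gaps between consecutive neighbours of \<open>x\<close> on \<open>cs!0 \<dots> cs!t\<close> would
  make the number of consecutive pairs in \<open>K\<close> even, but it has the parity of the odd \<open>t\<close>.\<close>
lemma complete_but_second_or_penultimate: "complete_but x (cs!1) \<or> complete_but x (cs!(t-1))"
proof (rule ccontr)
  assume "\<not> ?thesis"
  then have not_second: "\<not> complete_but x (cs!1)" and not_penult: "\<not> complete_but x (cs!(t-1))" by auto
  define A where "A = {i. i \<le> t \<and> E x (cs!i)}"
  have "even (consec_pairs K 0 t)"
  proof (rule consec_pairs_even_by_gaps[of t A 0 t])
    show "0 \<in> A" "t \<in> A" using adj_complete[OF complete_0 x] adj_complete[OF complete_t x] unfolding A_def by simp_all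
    fix a b assume "a \<in> A" "b \<in> A" "0 \<le> a" "a < b" "b \<le> t" "\<And>i. a < i \<Longrightarrow> i < b \<Longrightarrow> i \<notin> A"
    then show "even (consec_pairs K a b)"
      by (intro consec_pairs_even_between_neighbours[OF not_second not_penult]) (auto simp: A_def)
  qed simp_all
  moreover have "even (t - 0) \<longleftrightarrow> even (consec_pairs K 0 t)"
    by (rule even_gaps_parity[OF even_gaps_K]) (use complete_0 complete_t in \<open>auto simp: complete_to_def\<close>)
  ultimately show False using t_odd by simp
qed

end

context
  fixes qs
  assumes qs_path: "induced_path (compl_adj E) qs" and set_qs: "set qs = Y" and length_qs: "2 \<le> length qs"
begin

lemma qs_distinct: "distinct qs"
  using qs_path unfolding induced_path_def by simp

lemma qs_ends: "hd qs \<in> Y" "last qs \<in> Y" "hd qs \<noteq> last qs"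
proof -
  obtain q rest where qs: "qs = q # rest" using length_qs by (cases qs) auto
  with length_qs have "rest \<noteq> []" by (cases rest) auto
  then show "hd qs \<in> Y" "last qs \<in> Y" using qs set_qs by auto
  show "hd qs \<noteq> last qs" using qs \<open>rest \<noteq> []\<close> qs_distinct by auto
qed

lemma set_tl_qs: "set (tl qs) = Y - {hd qs}"
  using set_tl_distinct[OF qs_distinct] set_qs by simp

lemma set_butlast_qs: "set (butlast qs) = Y - {last qs}"
  using set_butlast_distinct[OF qs_distinct] set_qs by simp

lemma anticonnected_minus_ends: "anticonnected E (Y - {hd qs})" "anticonnected E (Y - {last qs})"
proof -
  have "tl qs \<noteq> []" "butlast qs \<noteq> []" using length_qs by (cases qs; auto)+
  then show "anticonnected E (Y - {hd qs})" "anticonnected E (Y - {last qs})"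
    unfolding anticonnected_iff_connected_on set_tl_qs[symmetric] set_butlast_qs[symmetric]
    using anti.connected_on_induced_path induced_path_tl[OF qs_path] induced_path_butlast[OF qs_path]
    by blast+
qed

lemma anticonnected_inner:
  assumes long: "3 \<le> length qs" shows "anticonnected E (Y - {hd qs, last qs})"
proof -
  have tl: "tl qs \<noteq> []" "last (tl qs) = last qs" using long by (cases qs; auto)+
  have "butlast (tl qs) \<noteq> []" using long by (cases qs) (auto simp: butlast_conv_take)
  then have "connected_on (compl_adj E) (set (butlast (tl qs)))"
    by (rule anti.connected_on_induced_path[OF induced_path_butlast[OF induced_path_tl[OF qs_path]]])
  moreover have "set (butlast (tl qs)) = Y - {hd qs, last qs}"
    using set_butlast_distinct[OF distinct_tl[OF qs_distinct]] set_tl_qs tl(2) by auto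
  ultimately show ?thesis unfolding anticonnected_iff_connected_on by simp
qed

lemma qs_in_V: "set qs \<subseteq> V"
  using set_qs Y_sub by simp

lemma cs_notin_qs: "i < length cs \<Longrightarrow> cs!i \<notin> set qs"
  using set_qs cs_notin_Y by simp

definition T_hd :: "nat set" where
  "T_hd = {i. 0 < i \<and> i < t \<and> complete_but (hd qs) (cs!i)}"

definition T_last :: "nat set" where
  "T_last = {i. 0 < i \<and> i < t \<and> complete_but (last qs) (cs!i)}"

lemma T_hd_adj: "i \<in> T_hd \<Longrightarrow> \<not> E (cs!i) (hd qs) \<and> (\<forall>q\<in>set (tl qs). E (cs!i) q)"
  using not_complete_inner[of i] set_tl_qs unfolding T_hd_def complete_to_def by blast

lemma T_last_adj: "i \<in> T_last \<Longrightarrow> \<not> E (cs!i) (last qs) \<and> (\<forall>q\<in>set (butlast qs). E (cs!i) q)"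
  using not_complete_inner[of i] set_butlast_qs unfolding T_last_def complete_to_def by blast

lemma T_disjoint: "T_hd \<inter> T_last = {}"
  using not_complete_inner qs_ends(3) unfolding T_hd_def T_last_def complete_to_def by blast

lemma T_inner: "T_hd \<subseteq> {0<..<t}" "T_last \<subseteq> {0<..<t}"
  unfolding T_hd_def T_last_def by auto

lemma even_gaps_T: "even_gaps (insert 0 (insert t T_hd)) t" "even_gaps (insert 0 (insert t T_last)) t"
proof -
  have "insert 0 (insert t T_hd) = {i. i \<le> t \<and> complete_but (hd qs) (cs!i)}"
    "insert 0 (insert t T_last) = {i. i \<le> t \<and> complete_but (last qs) (cs!i)}"
    using complete_0 complete_t unfolding T_hd_def T_last_def complete_to_def by auto
  moreover have "even_gaps {i. i \<le> t \<and> complete_but y (cs!i)} t" if "y \<in> Y" "anticonnected E (Y - {y})" for y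
    by (rule even_gaps_complete_positions) (use that exists_inner_complete_minus[OF that] in auto)
  ultimately show "even_gaps (insert 0 (insert t T_hd)) t" "even_gaps (insert 0 (insert t T_last)) t"
    using qs_ends anticonnected_minus_ends by simp_all
qed

text \<open>The antihole \<open>cs!i - qs - cs!j - c\<close>.\<close>
lemma adjacent_T_pair_odd:
  assumes i: "i \<in> T_hd" and j: "j \<in> T_last" and ij: "E (cs!i) (cs!j)"
    and c: "c \<in> V" "c \<notin> Y" "complete_to E Y c" "\<not> E c (cs!i)" "\<not> E c (cs!j)" "c \<noteq> cs!i" "c \<noteq> cs!j"
  shows "odd (length qs)"
proof (rule antipath_closure_through_apex_odd[OF qs_path length_qs qs_in_V])
  have il: "i < length cs" "j < length cs" using i j t_less T_inner by auto
  show "cs!i \<in> V" "cs!j \<in> V" "c \<in> V" using cs_in_V il c by auto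
  show "cs!i \<notin> set qs" "cs!j \<notin> set qs" "c \<notin> set qs" using cs_notin_qs il c set_qs by auto
  show "cs!i \<noteq> cs!j" using i j T_disjoint hole_nth_eq_iff[OF hole il] by auto
  show "\<And>q. q \<in> set qs \<Longrightarrow> E c q" using c(3) set_qs unfolding complete_to_def by blast
qed (use T_hd_adj[OF i] T_last_adj[OF j] ij c in auto)

lemma no_inner_complete_but_ends:
  assumes "3 \<le> length qs" "i < length cs" "\<not> E (cs!i) (hd qs)" "\<not> E (cs!i) (last qs)"
    and "complete_to E (Y - {hd qs, last qs}) (cs!i)"
  shows "odd (length qs)"
proof (rule antipath_closure_odd[OF qs_path assms(1) cs_notin_qs[OF assms(2)] _ assms(3,4)])
  show "set (cs!i # qs) \<subseteq> V" using qs_in_V cs_in_V[OF assms(2)] by simp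
  show "E (cs!i) q" if "q \<in> set qs" "q \<noteq> hd qs" "q \<noteq> last qs" for q
    using assms(5) that set_qs unfolding complete_to_def by blast
qed

context
  assumes hd_second: "complete_but (hd qs) (cs!1)" and last_penult: "complete_but (last qs) (cs!(t-1))"
begin

lemma second_penult_in_T: "1 \<in> T_hd" "t - 1 \<in> T_last"
  using hd_second last_penult t_ge_3 unfolding T_hd_def T_last_def by simp_all

text \<open>For \<open>t = 3\<close> the antihole is closed by the induced path \<open>cs!0 \<dots> cs!3\<close>, otherwise by
  the nonadjacent \<open>cs!1\<close> and \<open>cs!(t - 1)\<close>.\<close>
lemma even_length_qs: "even (length qs)"
proof (cases "t = 3")
  case True
  then obtain r where r: "t < r" "r < length cs" "complete_to E Y (cs!r)"
    using third_complete_or_last t_ge_5_if_last by fastforce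
  have L: "0 < length cs" "1 < length cs" "2 < length cs" "3 < length cs" "5 \<le> length cs" using r True by linarith+
  have T: "1 \<in> T_hd" "2 \<in> T_last" using second_penult_in_T True by simp_all
  have "odd (length qs)"
  proof (rule adjacent_T_pair_odd[OF T _ cs_in_V[OF r(2)] cs_notin_Y[OF r(2)] r(3)])
    show "E (cs!1) (cs!2)" using hole_adj[OF hole, of 1 2] L by simp
    show "\<not> E (cs!r) (cs!1)" "\<not> E (cs!r) (cs!2)" "cs!r \<noteq> cs!1" "cs!r \<noteq> cs!2"
      using hole_adj[OF hole r(2), of 1] hole_adj[OF hole r(2), of 2]
        hole_nth_eq_iff[OF hole r(2), of 1] hole_nth_eq_iff[OF hole r(2), of 2] r True L by auto
  qed
  moreover have "even (length qs)"
  proof (rule antipath_closure_through_P4_even[OF qs_path length_qs qs_in_V])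
    show "cs!0 \<in> V" "cs!1 \<in> V" "cs!2 \<in> V" "cs!3 \<in> V" using cs_in_V L by auto
    show "cs!0 \<notin> set qs" "cs!1 \<notin> set qs" "cs!2 \<notin> set qs" "cs!3 \<notin> set qs" using cs_notin_qs L by auto
    show "cs!0 \<noteq> cs!1" "cs!0 \<noteq> cs!2" "cs!0 \<noteq> cs!3" "cs!1 \<noteq> cs!2" "cs!1 \<noteq> cs!3" "cs!2 \<noteq> cs!3"
      using hole_nth_eq_iff[OF hole] L by auto
    show "E (cs!1) (cs!0)" "E (cs!1) (cs!2)" "E (cs!2) (cs!3)" "\<not> E (cs!0) (cs!2)" "\<not> E (cs!0) (cs!3)"
      "\<not> E (cs!1) (cs!3)"
      using hole_adj[OF hole] L by auto
    show "\<And>q. q \<in> set qs \<Longrightarrow> E (cs!0) q \<and> E (cs!3) q"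
      using complete_0 complete_t True set_qs unfolding complete_to_def by auto
  qed (use T_hd_adj[OF T(1)] T_last_adj[OF T(2)] in auto)
  ultimately show ?thesis by simp
next
  case False
  then have t5: "5 \<le> t" using t_ge_3 t_odd by presburger
  have il: "1 < length cs" "t - 1 < length cs" using t_less t5 by auto
  show ?thesis
  proof (rule antipath_closure_by_nonedge_even[OF qs_path length_qs qs_in_V])
    show "cs!1 \<in> V" "cs!(t-1) \<in> V" using cs_in_V il by auto
    show "cs!1 \<notin> set qs" "cs!(t-1) \<notin> set qs" using cs_notin_qs il by auto
    show "cs!1 \<noteq> cs!(t-1)" using hole_nth_eq_iff[OF hole il] t5 by auto
    show "\<not> E (cs!1) (cs!(t-1))" using hole_adj[OF hole il] t5 t_less by auto
  qed (use T_hd_adj[OF second_penult_in_T(1)] T_last_adj[OF second_penult_in_T(2)] in auto)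
qed

context
  fixes lo hi
  assumes lo_hi: "(lo \<in> T_hd \<and> hi \<in> T_last) \<or> (lo \<in> T_last \<and> hi \<in> T_hd)" "lo < hi"
    and T_gap: "\<And>c. lo < c \<Longrightarrow> c < hi \<Longrightarrow> c \<notin> T_hd \<and> c \<notin> T_last"
begin

lemma lo_hi_inner: "0 < lo" "hi < t"
  using lo_hi T_inner by auto

lemma crossing_not_adjacent: "hi \<noteq> Suc lo"
proof
  assume hi: "hi = Suc lo"
  have md: "t \<noteq> length cs - 1 \<or> 2 \<le> lo \<or> hi + 3 \<le> length cs"
    using t_ge_5_if_last lo_hi_inner hi by linarith
  obtain c where c: "c \<in> V" "c \<notin> Y" "complete_to E Y c"
    "\<And>k. lo \<le> k \<Longrightarrow> k \<le> hi \<Longrightarrow> \<not> E c (cs!k) \<and> c \<noteq> cs!k"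
    using exists_far_complete[of lo hi] lo_hi lo_hi_inner md by auto
  have adj: "E (cs!lo) (cs!hi)" "E (cs!hi) (cs!lo)"
    using hole_adj[OF hole, of lo hi] lo_hi_inner t_less hi sym by auto
  have "odd (length qs)"
    using lo_hi(1) adjacent_T_pair_odd[OF _ _ adj(1) c(1-3)] adjacent_T_pair_odd[OF _ _ adj(2) c(1-3)]
      c(4)[of lo] c(4)[of hi] lo_hi(2) by auto
  then show False using even_length_qs by simp
qed

lemma T_two:
  assumes two: "length qs = 2" and i: "0 < i" "i < t"
  shows "i \<in> T_hd \<longleftrightarrow> E (cs!i) (last qs)" "i \<in> T_last \<longleftrightarrow> E (cs!i) (hd qs)"
proof -
  have "Y - {hd qs} = {last qs}" "Y - {last qs} = {hd qs}"
    using qs_ends set_qs two by (cases qs; cases "tl qs"; auto)+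
  then show "i \<in> T_hd \<longleftrightarrow> E (cs!i) (last qs)" "i \<in> T_last \<longleftrightarrow> E (cs!i) (hd qs)"
    using i unfolding T_hd_def T_last_def complete_to_def by auto
qed

lemma two_nonadj: "length qs = 2 \<Longrightarrow> \<not> E (hd qs) (last qs)"
proof -
  assume two: "length qs = 2"
  then have ne: "qs \<noteq> []" by auto
  have "compl_adj E (qs!0) (qs!1)" using qs_path two unfolding induced_path_def by auto
  moreover have "hd qs = qs!0" "last qs = qs!1" using ne two by (simp_all add: hd_conv_nth last_conv_nth)
  ultimately show ?thesis unfolding compl_adj_def by simp
qed

lemma two_private_attachments:
  assumes two: "length qs = 2"
  obtains u w where "u \<in> Y" "w \<in> Y" "\<not> E u w" "E (cs!lo) u" "\<not> E (cs!hi) u" "E (cs!hi) w" "\<not> E (cs!lo) w"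
    "\<And>c. lo < c \<Longrightarrow> c < hi \<Longrightarrow> \<not> E (cs!c) u \<and> \<not> E (cs!c) w"
proof -
  have between: "\<not> E (cs!c) (hd qs) \<and> \<not> E (cs!c) (last qs)" if "lo < c" "c < hi" for c
    using T_gap[OF that] T_two[OF two, of c] that lo_hi_inner by auto
  show thesis
  proof (cases "lo \<in> T_hd")
    case True
    then have "hi \<in> T_last" using lo_hi(1) T_disjoint by auto
    then have "E (cs!lo) (last qs)" "\<not> E (cs!hi) (last qs)" "E (cs!hi) (hd qs)" "\<not> E (cs!lo) (hd qs)"
      using True T_two[OF two, of lo] T_two[OF two, of hi] T_disjoint lo_hi_inner lo_hi(2) by auto
    moreover have "\<not> E (last qs) (hd qs)" using nonadj_sym[OF two_nonadj[OF two]] .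
    ultimately show ?thesis using that[of "last qs" "hd qs"] qs_ends between by blast
  next
    case False
    then have "lo \<in> T_last" "hi \<in> T_hd" using lo_hi(1) by auto
    then have "E (cs!lo) (hd qs)" "\<not> E (cs!hi) (hd qs)" "E (cs!hi) (last qs)" "\<not> E (cs!lo) (last qs)"
      using T_two[OF two, of lo] T_two[OF two, of hi] T_disjoint lo_hi_inner lo_hi(2) by auto
    then show ?thesis using that[of "hd qs" "last qs"] qs_ends two_nonadj[OF two] between by blast
  qed
qed

text \<open>Without a far \<open>Y\<close>-complete vertex the two private attachments are the second outcome
  of the theorem.\<close>
lemma two_extreme_absurd:
  assumes two: "length qs = 2" and extreme: "t = length cs - 1" "lo = 1" "hi = length cs - 2"
  shows False
proof -
  obtain u w where uw: "u \<in> Y" "w \<in> Y" "\<not> E u w" and u_lo: "E (cs!lo) u" "\<not> E (cs!hi) u"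
    and w_hi: "E (cs!hi) w" "\<not> E (cs!lo) w" and between: "\<And>c. lo < c \<Longrightarrow> c < hi \<Longrightarrow> \<not> E (cs!c) u \<and> \<not> E (cs!c) w"
    using two_private_attachments[OF two] by blast
  have n6: "6 \<le> length cs" using t_ge_5_if_last extreme by simp
  have pattern: "(E (cs!i) u \<longleftrightarrow> (i = 0 \<or> i = 1 \<or> i = length cs - 1)) \<and>
    (E (cs!i) w \<longleftrightarrow> (i = 0 \<or> i = length cs - 2 \<or> i = length cs - 1))" if i: "i < length cs" for i
  proof -
    consider "i = 0" | "i = 1" | "i = length cs - 1" | "i = length cs - 2" | "1 < i" "i < length cs - 2"
      using i by linarith
    then show ?thesis
    proof cases
      case 1 then show ?thesis using complete_toD[OF complete_0] uw by simp
    next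
      case 2 then show ?thesis using u_lo w_hi extreme n6 by auto
    next
      case 3 then show ?thesis using complete_toD[OF complete_t] uw extreme by simp
    next
      case 4 then show ?thesis using u_lo w_hi extreme n6 by auto
    next
      case 5 then show ?thesis using between[of i] extreme by auto
    qed
  qed
  have flip: "E v (cs!i) \<longleftrightarrow> E (cs!i) v" for v i using sym by blast
  have "edge_attachment Y cs"
    unfolding edge_attachment_def flip using pattern uw by blast
  then show False using no_attachment extreme by simp
qed

lemma crossing_gap_even_two:
  assumes two: "length qs = 2"
  shows "even (hi - lo)"
proof -
  obtain u w where uw: "u \<in> Y" "w \<in> Y" "\<not> E u w" and u_lo: "E (cs!lo) u" "\<not> E (cs!hi) u"
    and w_hi: "E (cs!hi) w" "\<not> E (cs!lo) w" and between: "\<And>c. lo < c \<Longrightarrow> c < hi \<Longrightarrow> \<not> E (cs!c) u \<and> \<not> E (cs!c) w"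
    using two_private_attachments[OF two] by blast
  have "t \<noteq> length cs - 1 \<or> 2 \<le> lo \<or> hi + 3 \<le> length cs"
  proof (rule ccontr)
    assume "\<not> ?thesis"
    then have "t = length cs - 1" "lo = 1" "hi = length cs - 2" using lo_hi_inner t_less by linarith+
    then show False by (rule two_extreme_absurd[OF two])
  qed
  then obtain c where c: "c \<in> V" "c \<notin> Y" "complete_to E Y c"
    "\<And>k. lo \<le> k \<Longrightarrow> k \<le> hi \<Longrightarrow> \<not> E c (cs!k) \<and> c \<noteq> cs!k"
    using exists_far_complete[of lo hi] lo_hi lo_hi_inner by auto
  have flip: "E v (cs!i) \<longleftrightarrow> E (cs!i) v" for v i using sym by blast
  show ?thesis
  proof (rule gap_between_private_neighbours_even[OF uw lo_hi(2) _ _ _ _ _ _ c])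
    show "hi \<le> t" "\<not> (lo = 0 \<and> hi = length cs - 1)" using lo_hi_inner by auto
    show "E u (cs!lo)" "E w (cs!hi)" unfolding flip by (fact u_lo(1), fact w_hi(1))
    show "\<not> E u (cs!k)" if "lo < k" "k \<le> hi" for k
      unfolding flip using that between[of k] u_lo(2) by (cases "k = hi") auto
    show "\<not> E w (cs!k)" if "lo \<le> k" "k < hi" for k
      unfolding flip using that between[of k] w_hi(2) by (cases "k = lo") auto
  qed
qed

text \<open>With \<open>Y' = Y - {hd qs, last qs}\<close> anticonnected, the positions strictly between \<open>lo\<close> and
  \<open>hi\<close> are not \<open>Y'\<close>-complete (they would close an odd antihole with \<open>qs\<close>), so the induction
  hypothesis for \<open>Y'\<close> applies to the gap.\<close>
lemma crossing_gap_even_long: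
  assumes long: "3 \<le> length qs"
  shows "even (hi - lo)"
proof -
  define Y' where "Y' = Y - {hd qs, last qs}"
  have Y': "anticonnected E Y'" "Y' \<subset> Y"
    using anticonnected_inner[OF long] qs_ends unfolding Y'_def by auto
  have not_complete: "\<not> complete_to E Y' (cs!c)" if c: "lo < c" "c < hi" for c
  proof
    assume C: "complete_to E Y' (cs!c)"
    have ci: "0 < c" "c < t" "c < length cs" using c lo_hi_inner t_less by auto
    have "\<not> E (cs!c) (hd qs)"
    proof
      assume "E (cs!c) (hd qs)"
      then have "complete_to E (Y - {last qs}) (cs!c)" using C unfolding Y'_def complete_to_def by blast
      then show False using T_gap[OF c] ci unfolding T_last_def by simp
    qed
    moreover have "\<not> E (cs!c) (last qs)"
    proof
      assume "E (cs!c) (last qs)"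
      then have "complete_to E (Y - {hd qs}) (cs!c)" using C unfolding Y'_def complete_to_def by blast
      then show False using T_gap[OF c] ci unfolding T_hd_def by simp
    qed
    ultimately have "odd (length qs)"
      using no_inner_complete_but_ends[OF long ci(3)] C unfolding Y'_def by blast
    then show False using even_length_qs by simp
  qed
  have "complete_to E Y' (cs!i)" if "i \<in> T_hd \<union> T_last" for i
    using that unfolding T_hd_def T_last_def Y'_def complete_to_def by blast
  then have ends: "complete_to E Y' (cs!lo)" "complete_to E Y' (cs!hi)" using lo_hi(1) by blast+
  have "even_gaps {k. k \<le> t \<and> complete_to E Y' (cs!k)} t"
    by (rule even_gaps_complete_positions[OF Y'(2,1)], rule disjI2) (use ends(1) lo_hi_inner lo_hi(2) in auto)
  then have "hi = Suc lo \<or> even (hi - lo)"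
  proof (rule even_gapsD)
    show "lo \<in> {k. k \<le> t \<and> complete_to E Y' (cs!k)}" "hi \<in> {k. k \<le> t \<and> complete_to E Y' (cs!k)}"
      using ends lo_hi_inner lo_hi(2) by auto
    show "lo < hi" "hi \<le> t" using lo_hi(2) lo_hi_inner by auto
    show "i \<notin> {k. k \<le> t \<and> complete_to E Y' (cs!k)}" if "lo < i" "i < hi" for i
      using not_complete[OF that] by simp
  qed
  then show ?thesis using crossing_not_adjacent by simp
qed

lemma crossing_gap_even: "even (hi - lo)"
proof (cases "length qs = 2")
  case True
  then show ?thesis by (rule crossing_gap_even_two)
next
  case False
  then show ?thesis using length_qs crossing_gap_even_long by simp
qed

end

lemma antipath_absurd: False
proof -
  interpret interleaved_even_gaps T_hd T_last t
  proof
    show "T_hd \<subseteq> {0<..<t}" "T_last \<subseteq> {0<..<t}" "T_hd \<inter> T_last = {}" by (fact T_inner T_disjoint)+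
    show "T_hd \<noteq> {}" using second_penult_in_T by blast
    show "even_gaps (insert 0 (insert t T_hd)) t" "even_gaps (insert 0 (insert t T_last)) t"
      by (fact even_gaps_T)+
    show "even (max i j - min i j)" if "i \<in> T_hd" "j \<in> T_last"
      "\<And>c. min i j < c \<Longrightarrow> c < max i j \<Longrightarrow> c \<notin> T_hd \<and> c \<notin> T_last" for i j
    proof (cases "i < j")
      case True
      have "\<And>c. i < c \<Longrightarrow> c < j \<Longrightarrow> c \<notin> T_hd \<and> c \<notin> T_last" using that(3) True by simp
      then have "even (j - i)" using crossing_gap_even[of i j] that(1,2) True by blast
      then show ?thesis using True by simp
    next
      case False
      have "i \<noteq> j" using that(1,2) T_disjoint by blast
      then have ji: "j < i" using False by simp
      have "\<And>c. j < c \<Longrightarrow> c < i \<Longrightarrow> c \<notin> T_hd \<and> c \<notin> T_last" using that(3) ji by simp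
      then have "even (i - j)" using crossing_gap_even[of j i] that(1,2) ji by blast
      then show ?thesis using ji by simp
    qed
  qed
  show False using even_t t_odd by simp
qed

end

end

lemma noncut_complete_but_end:
  "u \<in> Y \<Longrightarrow> connected_on (compl_adj E) (Y - {u}) \<Longrightarrow> complete_but u (cs!1) \<or> complete_but u (cs!(t-1))"
  using complete_but_second_or_penultimate anticonnected_iff_connected_on by blast

lemma complete_but_end_unique:
  assumes "complete_but u (cs!i)" "complete_but u' (cs!i)" "i = 1 \<or> i = t - 1"
  shows "u = u'"
  by (rule complete_minus_unique[OF not_complete_inner assms(1,2)]) (use assms(3) t_ge_3 in auto)

lemma not_three_noncut:
  assumes "u1 \<in> Y" "u2 \<in> Y" "u3 \<in> Y" "u1 \<noteq> u2" "u1 \<noteq> u3" "u2 \<noteq> u3"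
    and "connected_on (compl_adj E) (Y - {u1})" "connected_on (compl_adj E) (Y - {u2})"
      "connected_on (compl_adj E) (Y - {u3})"
  shows False
  using noncut_complete_but_end[of u1] noncut_complete_but_end[of u2] noncut_complete_but_end[of u3] assms
    complete_but_end_unique[of u1 1 u2] complete_but_end_unique[of u1 1 u3] complete_but_end_unique[of u2 1 u3]
    complete_but_end_unique[of u1 "t-1" u2] complete_but_end_unique[of u1 "t-1" u3]
    complete_but_end_unique[of u2 "t-1" u3]
  by blast

text \<open>If the complement of \<open>G|Y\<close> is an induced path, its ends are non-cut vertices, and the
  orientation in which \<open>antipath_absurd\<close> applies is forced by the uniqueness of the vertices
  missing \<open>cs!1\<close> and \<open>cs!(t - 1)\<close>.\<close>
lemma not_antipath:
  assumes path: "induced_path (compl_adj E) qs" "set qs = Y" "2 \<le> length qs"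
  shows False
proof -
  have ends: "hd qs \<in> Y" "last qs \<in> Y" "hd qs \<noteq> last qs" by (rule qs_ends[OF path])+
  have noncut: "complete_but (hd qs) (cs!1) \<or> complete_but (hd qs) (cs!(t-1))"
    "complete_but (last qs) (cs!1) \<or> complete_but (last qs) (cs!(t-1))"
    using noncut_complete_but_end ends anticonnected_minus_ends[OF path]
    unfolding anticonnected_iff_connected_on by blast+
  show False
  proof (cases "complete_but (hd qs) (cs!1)")
    case True
    then have "complete_but (last qs) (cs!(t-1))"
      using noncut(2) complete_but_end_unique[of "hd qs" 1 "last qs"] ends(3) by blast
    then show False by (rule antipath_absurd[OF path True])
  next
    case False
    then have hd_penult: "complete_but (hd qs) (cs!(t-1))" using noncut(1) by blast
    then have last_second: "complete_but (last qs) (cs!1)"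
      using noncut(2) complete_but_end_unique[of "hd qs" "t-1" "last qs"] ends(3) by blast
    have rev: "induced_path (compl_adj E) (rev qs)" "set (rev qs) = Y" "2 \<le> length (rev qs)"
      using path induced_path_rev by auto
    show False using antipath_absurd[OF rev] last_second hd_penult by (simp add: hd_rev last_rev)
  qed
qed

lemma minimal_counterexample_absurd: False
proof -
  have conn: "connected_on (compl_adj E) Y" using Y_anticonnected unfolding anticonnected_iff_connected_on .
  obtain y where y: "y \<in> Y" using Y_anticonnected unfolding anticonnected_def by blast
  obtain y' where y': "y' \<in> Y" "y \<noteq> y'" using exists_nonneighbour[OF y] by blast
  show False
    using anti.three_noncut_or_induced_path[OF conn finite_subset[OF Y_sub finite_V] y y']
      not_three_noncut not_antipath by blast
qed

end

section \<open>The induction\<close>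

context berge_graph
begin

lemma complete_gaps_even_if_minimal:
  assumes Y: "Y \<subseteq> V" "anticonnected E Y"
    and IH: "\<And>Y'. Y' \<subset> Y \<Longrightarrow> anticonnected E Y' \<Longrightarrow> complete_gaps_even Y' \<and> edge_attachment_holds Y'"
  shows "complete_gaps_even Y"
  unfolding complete_gaps_even_def
proof (intro allI impI)
  fix cs t r
  assume h: "hole_in (V - Y) E cs" "0 < t" "t < r" "r < length cs" "complete_to E Y (cs ! 0)"
    "complete_to E Y (cs ! t)" "complete_to E Y (cs ! r)" "\<forall>i. 0 < i \<and> i < t \<longrightarrow> \<not> complete_to E Y (cs ! i)"
  show "t = 1 \<or> even t"
  proof (rule ccontr)
    assume "\<not> (t = 1 \<or> even t)"
    then have t: "3 \<le> t" "odd t" using h(2) by presburger+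
    interpret minimal_counterexample V E Y cs t
      by unfold_locales (use Y IH h t in auto)
    show False by (rule minimal_counterexample_absurd)
  qed
qed

lemma edge_attachment_holds_if_minimal:
  assumes Y: "Y \<subseteq> V" "anticonnected E Y"
    and IH: "\<And>Y'. Y' \<subset> Y \<Longrightarrow> anticonnected E Y' \<Longrightarrow> complete_gaps_even Y' \<and> edge_attachment_holds Y'"
  shows "edge_attachment_holds Y"
  unfolding edge_attachment_holds_def
proof (intro allI impI)
  fix cs
  assume h: "hole_in (V - Y) E cs" "4 < length cs" "complete_to E Y (cs ! 0)"
    "complete_to E Y (cs ! (length cs - 1))" "\<forall>i. 0 < i \<and> i < length cs - 1 \<longrightarrow> \<not> complete_to E Y (cs ! i)"
  show "edge_attachment Y cs"
  proof (rule ccontr)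
    assume "\<not> edge_attachment Y cs"
    moreover have "even (length cs)" using even_hole[OF hole_in_mono[OF h(1)]] by blast
    moreover have "3 \<le> length cs - 1" "odd (length cs - 1)" using h(2) \<open>even (length cs)\<close> by presburger+
    ultimately interpret minimal_counterexample V E Y cs "length cs - 1"
      by unfold_locales (use Y IH h in auto)
    show False by (rule minimal_counterexample_absurd)
  qed
qed

lemma complete_gaps_even_and_edge_attachment_holds:
  "finite Y \<Longrightarrow> Y \<subseteq> V \<Longrightarrow> anticonnected E Y \<Longrightarrow> complete_gaps_even Y \<and> edge_attachment_holds Y"
proof (induction "card Y" arbitrary: Y rule: less_induct)
  case less
  have IH: "complete_gaps_even Y' \<and> edge_attachment_holds Y'" if "Y' \<subset> Y" "anticonnected E Y'" for Y'
  proof -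
    have "finite Y'" "Y' \<subseteq> V" using that(1) less.prems(1,2) finite_subset by auto
    then show ?thesis using less.hyps[OF psubset_card_mono[OF less.prems(1) that(1)] _ _ that(2)] by blast
  qed
  show ?case
    using complete_gaps_even_if_minimal[OF less.prems(2,3) IH] edge_attachment_holds_if_minimal[OF less.prems(2,3) IH]
    by blast
qed

end

theorem theorem2p10:
  fixes V :: "'a set" and E :: "'a \<Rightarrow> 'a \<Rightarrow> bool" and X :: "'a set" and cs :: "'a list"
  assumes "berge V E"
    and "X \<subseteq> V"
    and "anticonnected E X"
    and "hole_in (V - X) E cs"
    and "length cs > 4"
    and "complete_to E X (cs ! 0)"
    and "complete_to E X (cs ! (length cs - 1))"
    and "\<forall>i. 0 < i \<and> i < length cs - 1 \<longrightarrow> \<not> complete_to E X (cs ! i)"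
  shows "(\<exists>x\<in>X. \<forall>i < length cs. E x (cs ! i) \<longleftrightarrow> (i = 0 \<or> i = length cs - 1))
     \<or> (\<exists>a\<in>X. \<exists>b\<in>X. \<not> E a b \<and>
          (\<forall>i < length cs. E a (cs ! i) \<longleftrightarrow> (i = 0 \<or> i = 1 \<or> i = length cs - 1)) \<and>
          (\<forall>i < length cs. E b (cs ! i) \<longleftrightarrow> (i = 0 \<or> i = length cs - 2 \<or> i = length cs - 1)))"
proof -
  interpret berge_graph V E by unfold_locales (rule assms(1))
  have "edge_attachment_holds X"
    using complete_gaps_even_and_edge_attachment_holds finite_subset[OF assms(2) finite_V] assms(2,3)
    by blast
  then have "edge_attachment X cs"
    using edge_attachment_holdsD assms(4-8) by blast
  then show ?thesis unfolding edge_attachment_def .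
qed

end
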